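(* Fix $1\le p\le4$. The function $\beta:\mathbb{R}\to[0,\infty)$ is continuous, i.e. $\lim_{t\to t_0}\beta(t)=\beta(t_0)$ for every $t_0\in\mathbb{R}$.
   Context: Functions in $W^{2,p}(0,1)$ are identified with their $C^1$ representatives; $w(0_+)$, $w(1_-)$, $w'(0_+)$ denote one-sided endpoint limits. For $w\in W^{2,p}(0,1)$, $\Phi(w):=\left(\int_0^1(w^2-1)^2dy\right)^{3/4}\left(\int_0^1|w''|^2dy\right)^{1/4}$. For $t\in\mathbb{R}$, $\mathscr{J}'(t):=\{w\in W^{2,p}(0,1): w(0_+)=-1,\ w(1_-)=t,\ w'(0_+)=0\}$ and $\beta(t):=\frac{4}{3^{3/4}}\inf_{w\in\mathscr{J}'(t)}\Phi(w)$. *)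

theory Defs
  imports "HOL-Analysis.Analysis"
begin

abbreviation I01 :: "real measure" where
  "I01 \<equiv> lebesgue_on {0<..<1}"

definition Lp :: "real \<Rightarrow> (real \<Rightarrow> real) \<Rightarrow> bool" where
  "Lp p f \<longleftrightarrow> f \<in> borel_measurable I01 \<and> integrable I01 (\<lambda>x. \<bar>f x\<bar> powr p)"

definition test_fun :: "(real \<Rightarrow> real) \<Rightarrow> bool" where
  "test_fun \<phi> \<longleftrightarrow> (\<forall>n x. ((deriv ^^ n) \<phi>) differentiable (at x))
     \<and> (\<exists>a b. 0 < a \<and> a \<le> b \<and> b < 1 \<and> (\<forall>x. x \<notin> {a..b} \<longrightarrow> \<phi> x = 0))"

definition weak_deriv :: "(real \<Rightarrow> real) \<Rightarrow> (real \<Rightarrow> real) \<Rightarrow> bool" where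
  "weak_deriv f g \<longleftrightarrow> (\<forall>\<phi>. test_fun \<phi> \<longrightarrow>
      (LINT x|I01. f x * deriv \<phi> x) = - (LINT x|I01. g x * \<phi> x))"

text \<open>w is the C^1 representative of an element of W^{2,p}(0,1):
  w is C^1 on (0,1), w and w' lie in L^p, and w' has a weak derivative in L^p.\<close>
definition W2p :: "real \<Rightarrow> (real \<Rightarrow> real) \<Rightarrow> bool" where
  "W2p p w \<longleftrightarrow> (\<forall>x\<in>{0<..<1}. w differentiable (at x))
     \<and> continuous_on {0<..<1} (deriv w)
     \<and> Lp p w \<and> Lp p (deriv w)
     \<and> (\<exists>g. Lp p g \<and> weak_deriv (deriv w) g)"

text \<open>The (a.e. unique) weak second derivative w''.\<close>
definition d2 :: "real \<Rightarrow> (real \<Rightarrow> real) \<Rightarrow> real \<Rightarrow> real" where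
  "d2 p w = (SOME g. Lp p g \<and> weak_deriv (deriv w) g)"

definition epow :: "ennreal \<Rightarrow> real \<Rightarrow> ennreal" where
  "epow x a = (if x = \<infinity> then \<infinity> else ennreal (enn2real x powr a))"

definition Phi :: "real \<Rightarrow> (real \<Rightarrow> real) \<Rightarrow> ennreal" where
  "Phi p w = epow (\<integral>\<^sup>+ y. ennreal (((w y)\<^sup>2 - 1)\<^sup>2) \<partial>I01) (3/4)
           * epow (\<integral>\<^sup>+ y. ennreal ((d2 p w y)\<^sup>2) \<partial>I01) (1/4)"

definition Jprime :: "real \<Rightarrow> real \<Rightarrow> (real \<Rightarrow> real) set" where
  "Jprime p t = {w. W2p p w \<and> (w \<longlongrightarrow> -1) (at_right 0) \<and> (w \<longlongrightarrow> t) (at_left 1)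
                  \<and> (deriv w \<longlongrightarrow> 0) (at_right 0)}"

definition beta :: "real \<Rightarrow> real \<Rightarrow> ennreal" where
  "beta p t = ennreal (4 / 3 powr (3/4)) * (INF w\<in>Jprime p t. Phi p w)"

end

theory Submission
  imports Defs "HOL-Computational_Algebra.Polynomial"
begin

text \<open>The constant profile \<open>-1\<close> lies in \<open>J'(-1)\<close> with both energies zero, and adding
  \<open>(t + 1) y\<^sup>2\<close> to it bounds \<open>\<beta>(t)\<close> by a multiple of \<open>(t + 1)\<^sup>4 + 5 (t + 1)\<^sup>2\<close>; this gives
  finiteness and continuity at \<open>-1\<close>.

  Away from \<open>-1\<close> continuity follows from a one-sided estimate that is uniform near every
  \<open>t\<^sub>0\<close>. Let \<open>w \<in> J'(s)\<close> have potential energy \<open>A = \<integral>(w\<^sup>2 - 1)\<^sup>2\<close> and bending energy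
  \<open>B = \<integral>w''\<^sup>2\<close>. Then \<open>w + c y\<^sup>k \<in> J'(s + c)\<close>, and Young's inequality with the weight
  \<open>\<theta> = (B/A)\<^sup>1\<^sup>/\<^sup>4\<close> that balances \<open>A\<^sup>3\<^sup>/\<^sup>4 B\<^sup>1\<^sup>/\<^sup>4\<close> bounds \<open>\<Phi>(w + c y\<^sup>k)\<close>; choosing \<open>k \<approx> \<theta>\<close>
  makes the increase at most \<open>\<tau> \<Phi>(w) + C c\<^sup>2\<close>. The constant \<open>C\<close> only depends on upper bounds
  for \<open>\<Phi>(w)\<close> and \<open>1/\<theta>\<close>, and \<open>\<theta>\<close> is bounded below because \<open>B \<ge> (s + 1)\<^sup>2\<close>, which follows
  from \<open>|w'| \<le> \<surd>B\<close>. Applying the estimate from \<open>t\<^sub>0\<close> and towards \<open>t\<^sub>0\<close> gives continuity.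

  The weak-derivative facts behind this (the fundamental theorem of calculus, and uniqueness of
  \<open>w''\<close> almost everywhere) are proved with smooth cutoffs built from \<open>e\<^sup>-\<^sup>1\<^sup>/\<^sup>x\<close>.\<close>

section \<open>Smooth cutoff functions\<close>

fun differentiable_upto :: "nat \<Rightarrow> (real \<Rightarrow> real) \<Rightarrow> bool" where
  "differentiable_upto 0 f \<longleftrightarrow> (\<forall>x. f differentiable (at x))"
| "differentiable_upto (Suc n) f \<longleftrightarrow> (\<forall>x. f differentiable (at x)) \<and> differentiable_upto n (deriv f)"

lemma differentiable_upto_imp_differentiable: "differentiable_upto n f \<Longrightarrow> f differentiable (at x)"
  by (cases n) auto

lemma differentiable_upto_SucD: "differentiable_upto (Suc n) f \<Longrightarrow> differentiable_upto n f"
  by (induction n arbitrary: f) auto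

lemma differentiable_upto_funpow_deriv:
  "(\<And>n. differentiable_upto n f) \<Longrightarrow> ((deriv ^^ n) f) differentiable (at x)"
proof (induction n arbitrary: f)
  case 0
  then show ?case using differentiable_upto_imp_differentiable[of 0 f] by simp
next
  case (Suc n)
  have "differentiable_upto m (deriv f)" for m using Suc.prems[of "Suc m"] by simp
  then show ?case using Suc.IH by (simp add: funpow_Suc_right del: funpow.simps)
qed

lemma deriv_eq_if_has_derivative: "(\<And>x. (f has_real_derivative f' x) (at x)) \<Longrightarrow> deriv f = f'"
  by (rule ext) (simp add: DERIV_imp_deriv)

lemma differentiable_upto_imp_continuous_deriv:
  "differentiable_upto (Suc n) f \<Longrightarrow> continuous_on UNIV (deriv f)"
  by (auto simp: differentiable_upto_imp_differentiable continuous_at_imp_continuous_on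
      differentiable_imp_continuous_within)

lemma differentiable_upto_const: "differentiable_upto n (\<lambda>x. c)"
proof (induction n arbitrary: c)
  case (Suc n)
  have "deriv (\<lambda>x. c) = (\<lambda>x. 0)" by (rule deriv_eq_if_has_derivative) simp
  then show ?case using Suc by simp
qed simp

lemma differentiable_upto_add:
  "differentiable_upto n f \<Longrightarrow> differentiable_upto n g \<Longrightarrow> differentiable_upto n (\<lambda>x. f x + g x)"
proof (induction n arbitrary: f g)
  case (Suc n)
  have "deriv (\<lambda>x. f x + g x) = (\<lambda>x. deriv f x + deriv g x)"
    using Suc.prems by (intro deriv_eq_if_has_derivative)
      (auto intro!: derivative_eq_intros DERIV_deriv_iff_real_differentiable[THEN iffD2])
  then show ?case using Suc by auto
qed auto

lemma differentiable_upto_diff: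
  "differentiable_upto n f \<Longrightarrow> differentiable_upto n g \<Longrightarrow> differentiable_upto n (\<lambda>x. f x - g x)"
proof (induction n arbitrary: f g)
  case (Suc n)
  have "deriv (\<lambda>x. f x - g x) = (\<lambda>x. deriv f x - deriv g x)"
    using Suc.prems by (intro deriv_eq_if_has_derivative)
      (auto intro!: derivative_eq_intros DERIV_deriv_iff_real_differentiable[THEN iffD2])
  then show ?case using Suc by auto
qed auto

lemma differentiable_upto_mult:
  "differentiable_upto n f \<Longrightarrow> differentiable_upto n g \<Longrightarrow> differentiable_upto n (\<lambda>x. f x * g x)"
proof (induction n arbitrary: f g)
  case (Suc n)
  have "deriv (\<lambda>x. f x * g x) = (\<lambda>x. deriv f x * g x + f x * deriv g x)"
    using Suc.prems by (intro deriv_eq_if_has_derivative)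
      (auto intro!: derivative_eq_intros DERIV_deriv_iff_real_differentiable[THEN iffD2])
  moreover have "differentiable_upto n (\<lambda>x. deriv f x * g x)" "differentiable_upto n (\<lambda>x. f x * deriv g x)"
    using Suc differentiable_upto_SucD by auto
  ultimately show ?case using Suc by (auto intro: differentiable_upto_add)
qed auto

lemma differentiable_upto_inverse:
  "differentiable_upto n g \<Longrightarrow> (\<And>x. g x \<noteq> 0) \<Longrightarrow> differentiable_upto n (\<lambda>x. inverse (g x))"
proof (induction n arbitrary: g)
  case 0
  then show ?case
    by (auto intro!: differentiable_compose[where f=inverse] simp: field_differentiable_imp_differentiable)
next
  case (Suc n)
  let ?h = "\<lambda>x. inverse (g x)"
  have "deriv ?h = (\<lambda>x. - deriv g x * (?h x * ?h x))"
    using Suc.prems by (intro deriv_eq_if_has_derivative)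
      (auto intro!: derivative_eq_intros DERIV_deriv_iff_real_differentiable[THEN iffD2]
        simp: power2_eq_square)
  moreover have h: "differentiable_upto n ?h"
    using Suc.IH[OF differentiable_upto_SucD[OF Suc.prems(1)] Suc.prems(2)] .
  moreover have "differentiable_upto n (\<lambda>x. - deriv g x)"
    using Suc differentiable_upto_mult[of n "\<lambda>x. -1" "deriv g"] differentiable_upto_const by auto
  ultimately have "differentiable_upto n (deriv ?h)"
    using differentiable_upto_mult[OF _ differentiable_upto_mult[OF h h]] by presburger
  then show ?case using differentiable_upto_imp_differentiable[OF h] by simp
qed

lemma differentiable_upto_compose_affine:
  "differentiable_upto n f \<Longrightarrow> differentiable_upto n (\<lambda>x. f (a * x + b))"
proof (induction n arbitrary: f)
  case 0
  then show ?case by (auto intro: differentiable_compose[where f=f])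
next
  case (Suc n)
  have "deriv (\<lambda>x. f (a * x + b)) = (\<lambda>x. a * deriv f (a * x + b))"
  proof (rule deriv_eq_if_has_derivative)
    fix x
    have "f differentiable (at (a * x + b))" using Suc.prems by simp
    then have "((\<lambda>x. f (a * x + b)) has_real_derivative deriv f (a * x + b) * a) (at x)"
      by (intro DERIV_chain2[where f=f]) (auto intro!: derivative_eq_intros
          DERIV_deriv_iff_real_differentiable[THEN iffD2])
    then show "((\<lambda>x. f (a * x + b)) has_real_derivative a * deriv f (a * x + b)) (at x)"
      by (simp add: mult.commute)
  qed
  moreover have "differentiable_upto n (\<lambda>x. a * deriv f (a * x + b))"
    using Suc by (auto intro!: differentiable_upto_mult differentiable_upto_const)
  moreover have "(\<lambda>x. f (a * x + b)) differentiable (at x)" for x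
    using Suc.prems by (auto intro: differentiable_compose[where f=f])
  ultimately show ?case by simp
qed

text \<open>The derivative of \<open>expinv_poly P\<close> is again of this form, which makes it smooth.\<close>

definition expinv_poly :: "real poly \<Rightarrow> real \<Rightarrow> real" where
  "expinv_poly P x = (if 0 < x then poly P (inverse x) * exp (- inverse x) else 0)"

definition expinv_deriv_poly :: "real poly \<Rightarrow> real poly" where
  "expinv_deriv_poly P = [:0, 0, 1:] * (P - pderiv P)"

lemma poly_times_exp_neg_tendsto_0: "((\<lambda>u. poly (P :: real poly) u * exp (- u)) \<longlongrightarrow> 0) at_top"
proof -
  have "((\<lambda>u. \<Sum>i\<le>degree P. coeff P i * (u ^ i / exp u)) \<longlongrightarrow> (\<Sum>i\<le>degree P. coeff P i * 0)) at_top"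
    by (intro tendsto_sum tendsto_mult tendsto_const tendsto_power_div_exp_0)
  moreover have "(\<lambda>u. \<Sum>i\<le>degree P. coeff P i * (u ^ i / exp u)) = (\<lambda>u. poly P u * exp (- u))"
    by (simp add: poly_altdef sum_distrib_right exp_minus divide_inverse mult.assoc)
  ultimately show ?thesis by simp
qed

lemma expinv_poly_has_derivative_0: "(expinv_poly P has_real_derivative 0) (at 0)"
proof -
  have "((\<lambda>h. poly (pCons 0 P) (inverse h) * exp (- inverse h)) \<longlongrightarrow> 0) (at_right (0::real))"
    using filterlim_compose[OF poly_times_exp_neg_tendsto_0[of "pCons 0 P"]
        filterlim_inverse_at_top_right] by (simp add: o_def)
  then have right: "((\<lambda>h. (expinv_poly P (0 + h) - expinv_poly P 0) / h) \<longlongrightarrow> 0) (at_right 0)"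
    by (rule Lim_transform_eventually) (use eventually_at_right_less[of "0::real"] in
        \<open>eventually_elim, auto simp: expinv_poly_def divide_inverse mult_ac\<close>)
  have left: "((\<lambda>h. (expinv_poly P (0 + h) - expinv_poly P 0) / h) \<longlongrightarrow> 0) (at_left 0)"
    by (rule Lim_transform_eventually[OF tendsto_const[of 0]])
      (auto simp: expinv_poly_def eventually_at_left_field intro: exI[of _ "-1"])
  show ?thesis using filterlim_split_at[OF left right] by (simp add: DERIV_def)
qed

lemma expinv_poly_has_derivative:
  "(expinv_poly P has_real_derivative expinv_poly (expinv_deriv_poly P) x) (at x)"
proof (cases x "0::real" rule: linorder_cases)
  case less
  have "((\<lambda>_. 0) has_real_derivative expinv_poly (expinv_deriv_poly P) x) (at x)"
    using less by (simp add: expinv_poly_def)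
  then show ?thesis
    by (rule has_field_derivative_transform_within_open[where S="{..<0}"])
      (use less in \<open>auto simp: expinv_poly_def\<close>)
next
  case equal
  moreover have "expinv_poly (expinv_deriv_poly P) 0 = 0" by (simp add: expinv_poly_def)
  ultimately show ?thesis using expinv_poly_has_derivative_0 by simp
next
  case greater
  let ?u = "inverse x"
  have "((\<lambda>x. poly P (inverse x) * exp (- inverse x)) has_real_derivative
      poly (pderiv P) ?u * (- (?u ^ 2)) * exp (- ?u) + poly P ?u * (exp (- ?u) * ?u ^ 2)) (at x)"
    using greater
    by (auto intro!: derivative_eq_intros DERIV_chain2[OF poly_DERIV] simp: power2_eq_square)
  moreover have "poly (pderiv P) ?u * (- (?u ^ 2)) * exp (- ?u) + poly P ?u * (exp (- ?u) * ?u ^ 2)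
      = expinv_poly (expinv_deriv_poly P) x"
    using greater by (simp add: expinv_poly_def expinv_deriv_poly_def algebra_simps power2_eq_square)
  ultimately show ?thesis
    by (metis (no_types, lifting) expinv_poly_def greater greaterThan_iff open_greaterThan
        has_field_derivative_transform_within_open)
qed

lemma differentiable_upto_expinv_poly: "differentiable_upto n (expinv_poly P)"
proof (induction n arbitrary: P)
  case 0
  then show ?case using expinv_poly_has_derivative by (auto simp: real_differentiable_def)
next
  case (Suc n)
  have "deriv (expinv_poly P) = expinv_poly (expinv_deriv_poly P)"
    by (rule deriv_eq_if_has_derivative) (rule expinv_poly_has_derivative)
  then show ?case using Suc expinv_poly_has_derivative by (auto simp: real_differentiable_def)
qed

definition smooth_step :: "real \<Rightarrow> real" where
  "smooth_step x = expinv_poly 1 x / (expinv_poly 1 x + expinv_poly 1 (1 - x))"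

lemma smooth_step_denominator_pos: "0 < expinv_poly 1 x + expinv_poly 1 (1 - x)"
  by (cases "0 < x") (auto simp: expinv_poly_def add_pos_nonneg add_nonneg_pos)

lemma differentiable_upto_smooth_step: "differentiable_upto n smooth_step"
proof -
  have "differentiable_upto n (\<lambda>x. expinv_poly 1 ((-1) * x + 1))"
    by (rule differentiable_upto_compose_affine[OF differentiable_upto_expinv_poly])
  then have "differentiable_upto n (\<lambda>x. inverse (expinv_poly 1 x + expinv_poly 1 (1 - x)))"
    using smooth_step_denominator_pos
    by (intro differentiable_upto_inverse differentiable_upto_add[OF differentiable_upto_expinv_poly])
      (auto simp: less_le)
  then show ?thesis unfolding smooth_step_def[abs_def] divide_inverse
    by (rule differentiable_upto_mult[OF differentiable_upto_expinv_poly])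
qed

lemma smooth_step_eq_0: "x \<le> 0 \<Longrightarrow> smooth_step x = 0"
  by (simp add: smooth_step_def expinv_poly_def)

lemma smooth_step_eq_1: "1 \<le> x \<Longrightarrow> smooth_step x = 1"
  using smooth_step_denominator_pos[of x] by (simp add: smooth_step_def expinv_poly_def)

lemma smooth_step_nonneg: "0 \<le> smooth_step x"
  using smooth_step_denominator_pos[of x] by (simp add: smooth_step_def expinv_poly_def)

lemma smooth_step_le_1: "smooth_step x \<le> 1"
  using smooth_step_denominator_pos[of x] by (simp add: smooth_step_def expinv_poly_def field_simps)

lemma smooth_step_has_derivative: "(smooth_step has_real_derivative deriv smooth_step x) (at x)"
  using differentiable_upto_imp_differentiable[OF differentiable_upto_smooth_step[of 0]]
  by (simp add: DERIV_deriv_iff_real_differentiable)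

lemma deriv_smooth_step_eq_0: "x \<le> 0 \<or> 1 \<le> x \<Longrightarrow> deriv smooth_step x = 0"
  by (elim disjE; intro DERIV_local_min[OF smooth_step_has_derivative zero_less_one]
      DERIV_local_max[OF smooth_step_has_derivative zero_less_one])
    (auto simp: smooth_step_eq_0 smooth_step_eq_1 smooth_step_nonneg smooth_step_le_1)

lemma continuous_deriv_smooth_step: "continuous_on UNIV (deriv smooth_step)"
  using differentiable_upto_smooth_step[of "Suc 0"] by (rule differentiable_upto_imp_continuous_deriv)

lemma deriv_smooth_step_bounded: obtains L where "0 < L" "\<And>x. \<bar>deriv smooth_step x\<bar> \<le> L"
proof -
  have "compact (deriv smooth_step ` {0..1})"
    by (rule compact_continuous_image[OF continuous_on_subset[OF continuous_deriv_smooth_step]]) auto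
  then obtain L where "0 < L" "\<forall>y\<in>deriv smooth_step ` {0..1}. norm y \<le> L"
    using compact_imp_bounded bounded_pos by metis
  moreover have "\<bar>deriv smooth_step x\<bar> \<le> L" if "\<forall>y\<in>deriv smooth_step ` {0..1}. norm y \<le> L" "0 < L" for x
    using that deriv_smooth_step_eq_0[of x] by (cases "x \<in> {0..1}") auto
  ultimately show ?thesis using that by blast
qed

definition step_kernel :: "real \<Rightarrow> real \<Rightarrow> real \<Rightarrow> real" where
  "step_kernel c e x = deriv smooth_step ((x - c) / e) / e"

lemma smooth_step_scaled_has_derivative:
  "((\<lambda>x. smooth_step ((x - c) / e)) has_real_derivative step_kernel c e x) (at x)"
proof -
  have "((\<lambda>x. (x - c) / e) has_real_derivative 1 / e) (at x)"
    using DERIV_cdivide[OF DERIV_diff[OF DERIV_ident DERIV_const[of c]], of e x] by simp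
  from DERIV_chain2[OF smooth_step_has_derivative this] show ?thesis
    by (simp add: step_kernel_def)
qed

lemma step_kernel_eq_0: "0 < e \<Longrightarrow> x \<notin> {c..c + e} \<Longrightarrow> step_kernel c e x = 0"
  unfolding step_kernel_def
  by (subst deriv_smooth_step_eq_0) (auto simp: pos_le_divide_eq pos_divide_le_eq)

lemma continuous_step_kernel: "continuous_on A (step_kernel c e)"
proof -
  have "continuous_on A (\<lambda>x. (x - c) * inverse e)" by (intro continuous_intros)
  from continuous_on_compose2[OF continuous_deriv_smooth_step this]
  have "continuous_on A (\<lambda>x. deriv smooth_step ((x - c) * inverse e) * inverse e)"
    by (intro continuous_intros) auto
  then show ?thesis by (simp add: step_kernel_def[abs_def] divide_inverse)
qed

lemma integral_step_kernel: "0 < e \<Longrightarrow> integral {c..c + e} (step_kernel c e) = 1"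
proof -
  assume e: "0 < e"
  have "(step_kernel c e has_integral smooth_step ((c + e - c) / e) - smooth_step ((c - c) / e)) {c..c + e}"
    using e smooth_step_scaled_has_derivative
    by (intro fundamental_theorem_of_calculus)
      (auto simp: has_real_derivative_iff_has_vector_derivative intro: has_vector_derivative_at_within)
  then show ?thesis using e by (simp add: integral_unique smooth_step_eq_0 smooth_step_eq_1)
qed

definition cutoff :: "real \<Rightarrow> real \<Rightarrow> real \<Rightarrow> real \<Rightarrow> real" where
  "cutoff a b e x = smooth_step ((x - a) / e) - smooth_step ((x - (b - e)) / e)"

lemma deriv_cutoff: "deriv (cutoff a b e) = (\<lambda>x. step_kernel a e x - step_kernel (b - e) e x)"
  unfolding cutoff_def[abs_def]
  by (intro deriv_eq_if_has_derivative DERIV_diff smooth_step_scaled_has_derivative)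

lemma differentiable_upto_cutoff: "differentiable_upto n (cutoff a b e)"
proof -
  have step: "differentiable_upto n (\<lambda>x. smooth_step ((x - c) / e))" for c
  proof -
    have "(\<lambda>x. smooth_step ((x - c) / e)) = (\<lambda>x. smooth_step ((1 / e) * x + (- c / e)))"
      by (simp add: diff_divide_distrib)
    then show ?thesis
      using differentiable_upto_compose_affine[OF differentiable_upto_smooth_step] by metis
  qed
  then show ?thesis unfolding cutoff_def[abs_def] by (intro differentiable_upto_diff step)
qed

lemma continuous_cutoff: "continuous_on A (cutoff a b e)"
  using differentiable_upto_imp_differentiable[OF differentiable_upto_cutoff[of 0]]
  by (meson continuous_at_imp_continuous_on differentiable_imp_continuous_within)

lemma cutoff_eq_0:
  assumes "0 < e" "2 * e \<le> b - a" "x \<notin> {a<..<b}"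
  shows "cutoff a b e x = 0"
proof (cases "x \<le> a")
  case True
  then show ?thesis using assms
    by (simp add: cutoff_def smooth_step_eq_0 pos_divide_le_eq)
next
  case False
  then show ?thesis using assms
    by (simp add: cutoff_def smooth_step_eq_1 pos_le_divide_eq)
qed

lemma cutoff_eq_1: "0 < e \<Longrightarrow> a + e \<le> x \<Longrightarrow> x \<le> b - e \<Longrightarrow> cutoff a b e x = 1"
  by (simp add: cutoff_def smooth_step_eq_0 smooth_step_eq_1 pos_le_divide_eq pos_divide_le_eq)

lemma abs_cutoff_le_1:
  assumes "0 < e" "2 * e \<le> b - a"
  shows "\<bar>cutoff a b e x\<bar> \<le> 1"
proof (cases "x \<le> b - e")
  case True
  then have "smooth_step ((x - (b - e)) / e) = 0" using assms by (simp add: smooth_step_eq_0 pos_divide_le_eq)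
  then show ?thesis using smooth_step_nonneg smooth_step_le_1 by (simp add: cutoff_def)
next
  case False
  then have "smooth_step ((x - a) / e) = 1" using assms by (simp add: smooth_step_eq_1 pos_le_divide_eq)
  then show ?thesis using smooth_step_nonneg smooth_step_le_1 by (simp add: cutoff_def)
qed

lemma test_fun_cutoff:
  assumes "0 < e" "2 * e \<le> b - a" "0 < a" "b < 1"
  shows "test_fun (cutoff a b e)"
  unfolding test_fun_def
  using differentiable_upto_funpow_deriv[OF differentiable_upto_cutoff] cutoff_eq_0[OF assms(1,2)] assms
  by (intro conjI allI exI[of _ a] exI[of _ b]) auto

section \<open>Weak derivatives on \<open>(0,1)\<close>\<close>

lemma finite_measure_I01: "finite_measure I01"
  by (rule finite_measure_lebesgue_on) simp

lemma emeasure_I01: "emeasure I01 {0<..<1} = 1"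
  by (simp add: emeasure_restrict_space)

lemma borel_measurable_I01_if_continuous: "continuous_on {0<..<1} f \<Longrightarrow> f \<in> borel_measurable I01"
  by (rule continuous_imp_measurable_on_sets_lebesgue) auto

lemma integrable_I01_bounded:
  fixes f :: "real \<Rightarrow> real"
  assumes "f \<in> borel_measurable I01" "\<And>x. x \<in> {0<..<1} \<Longrightarrow> \<bar>f x\<bar> \<le> B"
  shows "integrable I01 f"
  by (rule finite_measure.integrable_const_bound[OF finite_measure_I01, where B=B]) (use assms in auto)

lemma integral_I01_compact_support:
  fixes F :: "real \<Rightarrow> real"
  assumes F: "continuous_on {0<..<1} F" and lh: "0 < lo" "hi < 1"
    and zero: "\<And>x. x \<notin> {lo..hi} \<Longrightarrow> F x = 0"
  shows "integrable I01 F" "(LINT x|I01. F x) = integral {lo..hi} F"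
proof -
  have "compact (F ` {lo..hi})"
    by (rule compact_continuous_image[OF continuous_on_subset[OF F]]) (use lh in auto)
  then obtain B where "\<forall>y\<in>F ` {lo..hi}. norm y \<le> B"
    using compact_imp_bounded bounded_pos by metis
  then have "\<bar>F x\<bar> \<le> max 0 B" for x
    using zero[of x] by (cases "x \<in> {lo..hi}") (auto simp: le_max_iff_disj)
  moreover have "F \<in> borel_measurable I01"
    by (rule borel_measurable_I01_if_continuous[OF F])
  ultimately show int: "integrable I01 F" by (intro integrable_I01_bounded)
  have "(LINT x|I01. F x) = integral {0<..<1} F"
    by (rule lebesgue_integral_eq_integral[OF int]) simp
  also have "\<dots> = integral ({lo..hi} \<inter> {0<..<1}) F"
    by (subst integral_restrict_Int[symmetric]) (metis zero)
  also have "{lo..hi} \<inter> {0<..<1} = {lo..hi}" using lh by auto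
  finally show "(LINT x|I01. F x) = integral {lo..hi} F" .
qed

lemma integral_I01_step_kernel:
  fixes f :: "real \<Rightarrow> real"
  assumes "continuous_on {0<..<1} f" "0 < e" "0 < c" "c + e < 1"
  shows "integrable I01 (\<lambda>x. f x * step_kernel c e x)"
    "(LINT x|I01. f x * step_kernel c e x) = integral {c..c + e} (\<lambda>x. f x * step_kernel c e x)"
  using integral_I01_compact_support[of "\<lambda>x. f x * step_kernel c e x" c "c + e"] assms
  by (auto intro!: continuous_intros continuous_step_kernel simp: step_kernel_eq_0)

lemma step_kernel_integral_tendsto:
  fixes f :: "real \<Rightarrow> real"
  assumes f: "continuous_on {0<..<1} f" and e: "e \<longlonglongrightarrow> 0" "\<And>n. 0 < e n"
    and c: "\<And>n. 0 < c n \<and> c n + e n < 1 \<and> c n \<le> x0 \<and> x0 \<le> c n + e n"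
  shows "(\<lambda>n. LINT x|I01. f x * step_kernel (c n) (e n) x) \<longlonglongrightarrow> f x0"
proof (rule LIMSEQ_I)
  fix r :: real assume r: "0 < r"
  obtain L where L: "0 < L" "\<And>y. \<bar>deriv smooth_step y\<bar> \<le> L"
    using deriv_smooth_step_bounded by blast
  have "x0 \<in> {0<..<1}" using c[of 0] e(2)[of 0] by auto
  then have "isCont f x0" using f by (simp add: continuous_on_eq_continuous_at)
  then obtain s where s: "0 < s" "\<And>t. \<bar>t - x0\<bar> < s \<Longrightarrow> \<bar>f t - f x0\<bar> < r / (2 * L)"
    using r L unfolding continuous_at_eps_delta dist_real_def by (metis divide_pos_pos mult_pos_pos zero_less_numeral)
  obtain N where N: "\<And>n. N \<le> n \<Longrightarrow> e n < s"
    using order_tendstoD(2)[OF e(1) s(1)] by (auto simp: eventually_sequentially)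
  have "norm ((LINT x|I01. f x * step_kernel (c n) (e n) x) - f x0) < r" if n: "N \<le> n" for n
  proof -
    let ?I = "{c n..c n + e n}" and ?K = "step_kernel (c n) (e n)"
    have fc: "continuous_on ?I f" by (rule continuous_on_subset[OF f]) (use c[of n] e(2)[of n] in auto)
    have "(LINT x|I01. f x * ?K x) - f x0 = integral ?I (\<lambda>x. f x * ?K x) - integral ?I (\<lambda>x. f x0 * ?K x)"
      using integral_I01_step_kernel[OF f e(2)] c[of n] integral_step_kernel[OF e(2)] by simp
    also have "\<dots> = integral ?I (\<lambda>x. (f x - f x0) * ?K x)"
      by (subst integral_diff[symmetric])
        (auto intro!: integrable_continuous_interval continuous_intros fc continuous_step_kernel
          simp: algebra_simps)
    finally have eq: "(LINT x|I01. f x * ?K x) - f x0 = integral ?I (\<lambda>x. (f x - f x0) * ?K x)" .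
    have "norm ((f t - f x0) * ?K t) \<le> r / (2 * L) * (L / e n)" if t: "t \<in> ?I" for t
    proof -
      have "\<bar>t - x0\<bar> < s" using t c[of n] N[OF n] by auto
      then have "\<bar>f t - f x0\<bar> \<le> r / (2 * L)" using s(2) by fastforce
      moreover have "\<bar>?K t\<bar> \<le> L / e n"
        using L(2) e(2)[of n] by (simp add: step_kernel_def divide_right_mono)
      ultimately show ?thesis unfolding norm_mult real_norm_def abs_mult by (intro mult_mono) auto
    qed
    then have "norm (integral ?I (\<lambda>x. (f x - f x0) * ?K x)) \<le> r / (2 * L) * (L / e n) * (c n + e n - c n)"
      using e(2)[of n] by (intro integral_bound) (auto intro!: continuous_intros fc continuous_step_kernel)
    also have "\<dots> < r" using r L e(2)[of n] by simp
    finally show ?thesis using eq by simp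
  qed
  then show "\<exists>N. \<forall>n\<ge>N. norm ((LINT x|I01. f x * step_kernel (c n) (e n) x) - f x0) < r" by blast
qed

lemma cutoff_integral_tendsto:
  fixes g :: "real \<Rightarrow> real"
  assumes g: "integrable I01 g" and e: "e \<longlonglongrightarrow> 0" "\<And>n. 0 < e n" "\<And>n. 2 * e n \<le> b - a"
  shows "(\<lambda>n. LINT x|I01. g x * cutoff a b (e n) x) \<longlonglongrightarrow> (LINT x|I01. indicator {a<..<b} x * g x)"
proof (rule integral_dominated_convergence[where w="\<lambda>x. \<bar>g x\<bar>"])
  have gm: "g \<in> borel_measurable I01" using g by (rule borel_measurable_integrable)
  have "indicator {a<..<b} \<in> borel_measurable I01"
    by (rule measurable_restrict_space1) (rule borel_measurable_indicator, simp)
  then show "(\<lambda>x. indicator {a<..<b} x * g x) \<in> borel_measurable I01"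
    using gm by (rule borel_measurable_times)
  show "(\<lambda>x. g x * cutoff a b (e n) x) \<in> borel_measurable I01" for n
    using gm borel_measurable_I01_if_continuous[OF continuous_cutoff] by measurable
  show "integrable I01 (\<lambda>x. \<bar>g x\<bar>)" using g by (rule integrable_abs)
  show "AE x in I01. norm (g x * cutoff a b (e n) x) \<le> \<bar>g x\<bar>" for n
    using abs_cutoff_le_1[OF e(2,3)] by (auto simp: abs_mult intro!: mult_left_le)
  show "AE x in I01. (\<lambda>n. g x * cutoff a b (e n) x) \<longlonglongrightarrow> indicator {a<..<b} x * g x"
  proof (intro AE_I2)
    fix x
    show "(\<lambda>n. g x * cutoff a b (e n) x) \<longlonglongrightarrow> indicator {a<..<b} x * g x"
    proof (cases "a < x \<and> x < b")
      case True
      then have "eventually (\<lambda>n. e n < min (x - a) (b - x)) sequentially"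
        by (intro order_tendstoD(2)[OF e(1)]) simp
      then have "eventually (\<lambda>n. g x * cutoff a b (e n) x = indicator {a<..<b} x * g x) sequentially"
        by eventually_elim (use True e(2) in \<open>simp add: cutoff_eq_1\<close>)
      then show ?thesis by (rule tendsto_eventually)
    next
      case False
      then show ?thesis by (simp add: cutoff_eq_0[OF e(2,3)])
    qed
  qed
qed

lemma weak_deriv_integral_eq:
  fixes f g :: "real \<Rightarrow> real"
  assumes f: "continuous_on {0<..<1} f" and g: "integrable I01 g" and fg: "weak_deriv f g"
    and ab: "0 < a" "a < b" "b < 1"
  shows "f b - f a = (LINT x|I01. indicator {a<..<b} x * g x)"
proof -
  define e where "e n = (b - a) / 2 * inverse (real (Suc n))" for n
  have "e \<longlonglongrightarrow> 0"
    unfolding e_def using tendsto_mult_right_zero[OF LIMSEQ_inverse_real_of_nat] by simp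
  moreover have "0 < e n" for n using ab by (simp add: e_def)
  moreover have "2 * e n \<le> b - a" for n
    using ab mult_left_mono[OF inverse_le_1_iff[THEN iffD2], of "real (Suc n)" "(b - a) / 2"]
    by (simp add: e_def)
  ultimately have e: "e \<longlonglongrightarrow> 0" "0 < e n" "2 * e n \<le> b - a" for n by auto
  have bounds: "0 < a" "a + e n < 1" "0 < b - e n" "b - e n + e n < 1" for n
    using e(3)[of n] ab by auto
  have "(\<lambda>n. (LINT x|I01. f x * step_kernel a (e n) x) - (LINT x|I01. f x * step_kernel (b - e n) (e n) x))
      \<longlonglongrightarrow> f a - f b"
    using bounds e(2) by (intro tendsto_diff step_kernel_integral_tendsto[OF f e(1)])
      (auto simp: less_imp_le)
  also have "(\<lambda>n. (LINT x|I01. f x * step_kernel a (e n) x) - (LINT x|I01. f x * step_kernel (b - e n) (e n) x))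
      = (\<lambda>n. LINT x|I01. f x * deriv (cutoff a b (e n)) x)"
    by (simp add: deriv_cutoff right_diff_distrib integral_I01_step_kernel(1)[OF f e(2) bounds(1,2)]
        integral_I01_step_kernel(1)[OF f e(2) bounds(3,4)])
  also have "\<dots> = (\<lambda>n. - (LINT x|I01. g x * cutoff a b (e n) x))"
    using fg test_fun_cutoff[OF e(2,3) ab(1,3)] by (simp add: weak_deriv_def)
  finally have "(\<lambda>n. - (LINT x|I01. g x * cutoff a b (e n) x)) \<longlonglongrightarrow> f a - f b" .
  moreover have "(\<lambda>n. - (LINT x|I01. g x * cutoff a b (e n) x)) \<longlonglongrightarrow> - (LINT x|I01. indicator {a<..<b} x * g x)"
    by (intro tendsto_minus cutoff_integral_tendsto[OF g e])
  ultimately show ?thesis using LIMSEQ_unique by fastforce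
qed

lemma integrable_I01_indicator_mult:
  fixes g :: "real \<Rightarrow> real"
  assumes g: "integrable I01 g" and S: "S \<in> sets lebesgue"
  shows "integrable I01 (\<lambda>x. indicator S x * g x)"
proof (rule Bochner_Integration.integrable_bound[OF g])
  have "indicator S \<in> borel_measurable I01"
    by (rule measurable_restrict_space1) (rule borel_measurable_indicator[OF S])
  then show "(\<lambda>x. indicator S x * g x) \<in> borel_measurable I01"
    using borel_measurable_integrable[OF g] by (rule borel_measurable_times)
qed (auto simp: indicator_def)

lemma has_integral_extension_I01:
  fixes h :: "real \<Rightarrow> real"
  assumes h: "integrable I01 h"
  shows "((\<lambda>z. indicator {0<..<1} z * h z) has_integral (LINT z|I01. indicator {x<..<y} z * h z)) {x..y}"
proof -
  define H where "H z = indicator {0<..<1} z * h z" for z :: real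
  let ?S = "{x<..<y}"
  have "integrable lebesgue H"
    using h integrable_restrict_space[of "{0<..<1::real}" lebesgue h] by (simp add: H_def[abs_def])
  then have "integrable lebesgue (\<lambda>z. indicator ?S z * H z)"
    by (simp add: integrable_mult_indicator[of ?S lebesgue H, simplified])
  moreover have "(\<lambda>z. indicator ?S z * H z) = (\<lambda>z. if z \<in> ?S then H z else 0)"
    by (auto simp: indicator_def)
  moreover have "(LINT z|lebesgue. indicator ?S z * H z) = (LINT z|I01. indicator ?S z * h z)"
    by (simp add: integral_restrict_space H_def mult_ac)
  ultimately have "((\<lambda>z. if z \<in> ?S then H z else 0) has_integral (LINT z|I01. indicator ?S z * h z)) UNIV"
    using has_integral_integral_lebesgue by metis
  then have "(H has_integral (LINT z|I01. indicator ?S z * h z)) ?S"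
    using has_integral_restrict_UNIV[of ?S H] by simp
  then show ?thesis by (simp add: has_integral_Icc_iff_Ioo H_def[abs_def])
qed

text \<open>Lebesgue's differentiation theorem turns vanishing interval integrals into vanishing
  values almost everywhere.\<close>

lemma AE_I01_eq_0_if_interval_integrals_eq_0:
  fixes h :: "real \<Rightarrow> real"
  assumes h: "integrable I01 h"
    and zero: "\<And>a b. 0 < a \<Longrightarrow> a < b \<Longrightarrow> b < 1 \<Longrightarrow> (LINT x|I01. indicator {a<..<b} x * h x) = 0"
  shows "AE x in I01. h x = 0"
proof -
  define H where "H x = indicator {0<..<1} x * h x" for x :: real
  have "H integrable_on cbox a b" for a b
    using has_integral_extension_I01[OF h, of a b] unfolding H_def[abs_def] integrable_on_def by auto
  then obtain N where N: "negligible N" and lim: "\<And>x e. x \<notin> N \<Longrightarrow> 0 < e \<Longrightarrow>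
      \<exists>d>0. \<forall>r. 0 < r \<and> r < d \<longrightarrow> norm (integral (cbox x (x + r *\<^sub>R One)) H /\<^sub>R r ^ DIM(real) - H x) < e"
    using integrable_ccontinuous_explicit by blast
  have "H x = 0" if x: "x \<in> {0<..<1}" "x \<notin> N" for x
  proof (rule ccontr)
    assume "H x \<noteq> 0"
    then obtain d where d: "0 < d"
      "\<And>r. 0 < r \<Longrightarrow> r < d \<Longrightarrow> norm (integral {x..x + r} H / r - H x) < \<bar>H x\<bar>"
      using lim[OF x(2), of "\<bar>H x\<bar>"] by (auto simp: divide_inverse_commute)
    let ?r = "min (d / 2) ((1 - x) / 2)"
    have r: "0 < ?r" "?r < d" "x + ?r < 1" using d(1) x by (auto simp: min_def field_simps)
    have "norm (integral {x..x + ?r} H / ?r - H x) < \<bar>H x\<bar>" using r by (intro d(2))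
    moreover have "integral {x..x + ?r} H = 0"
      using has_integral_extension_I01[OF h, of x "x + ?r"] zero[of x "x + ?r"] r x
      unfolding H_def[abs_def] by (simp add: integral_unique)
    ultimately show False by simp
  qed
  then have "{x \<in> space lebesgue. \<not> (x \<in> {0<..<1} \<longrightarrow> h x = 0)} \<subseteq> N" by (auto simp: H_def)
  then have "AE x in lebesgue. x \<in> {0<..<1} \<longrightarrow> h x = 0"
    using N negligible_iff_null_sets by (blast intro: AE_I')
  then show ?thesis by (subst AE_restrict_space_iff) auto
qed

lemma weak_deriv_unique_AE:
  fixes f g1 g2 :: "real \<Rightarrow> real"
  assumes f: "continuous_on {0<..<1} f" and g: "integrable I01 g1" "integrable I01 g2"
    and fg: "weak_deriv f g1" "weak_deriv f g2"
  shows "AE x in I01. g1 x = g2 x"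
proof -
  have "AE x in I01. g1 x - g2 x = 0"
  proof (rule AE_I01_eq_0_if_interval_integrals_eq_0)
    fix a b :: real assume ab: "0 < a" "a < b" "b < 1"
    have "(LINT x|I01. indicator {a<..<b} x * (g1 x - g2 x))
        = (LINT x|I01. indicator {a<..<b} x * g1 x) - (LINT x|I01. indicator {a<..<b} x * g2 x)"
      using g by (simp add: right_diff_distrib integrable_I01_indicator_mult)
    also have "\<dots> = 0"
      using weak_deriv_integral_eq[OF f g(1) fg(1) ab] weak_deriv_integral_eq[OF f g(2) fg(2) ab] by simp
    finally show "(LINT x|I01. indicator {a<..<b} x * (g1 x - g2 x)) = 0" .
  qed (use g in auto)
  then show ?thesis by eventually_elim simp
qed

section \<open>\<open>L\<^sup>p\<close> and \<open>W\<^sup>2\<^sup>,\<^sup>p\<close>\<close>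

lemma Lp_imp_integrable:
  fixes g :: "real \<Rightarrow> real"
  assumes p: "1 \<le> p" and g: "Lp p g"
  shows "integrable I01 g"
proof (rule Bochner_Integration.integrable_bound[where f="\<lambda>x. 1 + \<bar>g x\<bar> powr p"])
  show "integrable I01 (\<lambda>x. 1 + \<bar>g x\<bar> powr p)"
    using g finite_measure.integrable_const[OF finite_measure_I01]
    by (intro Bochner_Integration.integrable_add) (auto simp: Lp_def)
  show "g \<in> borel_measurable I01" using g by (simp add: Lp_def)
  have "\<bar>g x\<bar> \<le> 1 + \<bar>g x\<bar> powr p" for x
  proof (cases "\<bar>g x\<bar> \<le> 1")
    case False
    then have "\<bar>g x\<bar> powr 1 \<le> \<bar>g x\<bar> powr p" using p by (intro powr_mono) auto
    then show ?thesis using False by simp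
  qed (use powr_ge_zero[of "\<bar>g x\<bar>" p] in linarith)
  then show "AE x in I01. norm (g x) \<le> norm (1 + \<bar>g x\<bar> powr p)" by simp
qed

lemma Lp_cong:
  assumes "\<And>x. x \<in> {0<..<1} \<Longrightarrow> f x = g x" "Lp p f"
  shows "Lp p g"
proof -
  have "g \<in> borel_measurable I01"
    using assms measurable_cong[of I01 f g] by (auto simp: Lp_def)
  moreover have "integrable I01 (\<lambda>x. \<bar>g x\<bar> powr p)"
    using assms Bochner_Integration.integrable_cong[of I01 I01 "\<lambda>x. \<bar>f x\<bar> powr p" "\<lambda>x. \<bar>g x\<bar> powr p"]
    by (auto simp: Lp_def)
  ultimately show ?thesis by (simp add: Lp_def)
qed

lemma abs_add_powr_le:
  fixes u v :: real
  assumes p: "0 \<le> p"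
  shows "\<bar>u + v\<bar> powr p \<le> 2 powr p * (\<bar>u\<bar> powr p + \<bar>v\<bar> powr p)"
proof -
  have "\<bar>u + v\<bar> powr p \<le> (2 * max \<bar>u\<bar> \<bar>v\<bar>) powr p" using p by (intro powr_mono2) auto
  also have "\<dots> = 2 powr p * max \<bar>u\<bar> \<bar>v\<bar> powr p" by (simp add: powr_mult)
  also have "\<dots> \<le> 2 powr p * (\<bar>u\<bar> powr p + \<bar>v\<bar> powr p)"
    by (intro mult_left_mono) (auto simp: max_def)
  finally show ?thesis .
qed

lemma Lp_add:
  fixes f h :: "real \<Rightarrow> real"
  assumes p: "0 \<le> p" and f: "Lp p f" and h: "Lp p h"
  shows "Lp p (\<lambda>x. f x + h x)"
proof -
  have m: "(\<lambda>x. f x + h x) \<in> borel_measurable I01" using f h by (auto simp: Lp_def)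
  have "integrable I01 (\<lambda>x. \<bar>f x + h x\<bar> powr p)"
  proof (rule Bochner_Integration.integrable_bound)
    show "integrable I01 (\<lambda>x. 2 powr p * (\<bar>f x\<bar> powr p + \<bar>h x\<bar> powr p))"
      using f h by (auto simp: Lp_def)
    show "AE x in I01. norm (\<bar>f x + h x\<bar> powr p) \<le> norm (2 powr p * (\<bar>f x\<bar> powr p + \<bar>h x\<bar> powr p))"
      using abs_add_powr_le[OF p] by simp
  qed (use m in measurable)
  then show ?thesis using m by (simp add: Lp_def)
qed

lemma Lp_continuous_bounded:
  fixes f :: "real \<Rightarrow> real"
  assumes p: "0 \<le> p" and f: "continuous_on {0<..<1} f" and B: "\<And>x. x \<in> {0<..<1} \<Longrightarrow> \<bar>f x\<bar> \<le> B"
  shows "Lp p f"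
proof -
  have m: "f \<in> borel_measurable I01"
    by (rule borel_measurable_I01_if_continuous[OF f])
  have "integrable I01 (\<lambda>x. \<bar>f x\<bar> powr p)"
    using m B p by (intro integrable_I01_bounded[where B="B powr p"]) (auto intro: powr_mono2)
  then show ?thesis using m by (simp add: Lp_def)
qed

lemma test_fun_differentiable:
  assumes "test_fun \<phi>"
  shows "\<phi> differentiable (at x)" "deriv \<phi> differentiable (at x)"
  using assms unfolding test_fun_def by (metis funpow_0, metis funpow_0 funpow.simps(2) o_apply)

lemma test_fun_has_derivative: "test_fun \<phi> \<Longrightarrow> (\<phi> has_real_derivative deriv \<phi> x) (at x)"
  using test_fun_differentiable(1) by (simp add: DERIV_deriv_iff_real_differentiable)

lemma test_fun_continuous:
  assumes "test_fun \<phi>"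
  shows "continuous_on A \<phi>" "continuous_on A (deriv \<phi>)"
proof -
  note test_fun_differentiable[OF assms]
  then show "continuous_on A \<phi>" "continuous_on A (deriv \<phi>)"
    by (simp_all add: continuous_at_imp_continuous_on differentiable_imp_continuous_within)
qed

lemma test_fun_support:
  fixes \<phi> :: "real \<Rightarrow> real"
  assumes "test_fun \<phi>"
  obtains a b where "0 < a" "a < b" "b < 1" "\<And>x. x \<notin> {a<..<b} \<Longrightarrow> \<phi> x = 0 \<and> deriv \<phi> x = 0"
proof -
  from assms obtain a b where ab: "0 < a" "a \<le> b" "b < 1" and zero: "\<And>x. x \<notin> {a..b} \<Longrightarrow> \<phi> x = 0"
    unfolding test_fun_def by blast
  have "deriv \<phi> x = 0" if x: "x \<notin> {a..b}" for x
  proof -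
    have "(\<phi> has_real_derivative 0) (at x)"
      by (rule has_field_derivative_transform_within_open[where S="- {a..b}" and f="\<lambda>_. 0"])
        (use x zero in auto)
    then show ?thesis by (rule DERIV_imp_deriv)
  qed
  moreover have "x \<notin> {a..b}" if "x \<notin> {a / 2<..<(b + 1) / 2}" for x using that ab by auto
  ultimately show ?thesis using zero ab by (intro that[of "a / 2" "(b + 1) / 2"]) auto
qed

lemma integrable_mult_test_fun:
  fixes g \<phi> :: "real \<Rightarrow> real"
  assumes g: "integrable I01 g" and \<phi>: "test_fun \<phi>"
  shows "integrable I01 (\<lambda>x. g x * \<phi> x)"
proof -
  obtain a b where "0 < a" "a < b" "b < 1" and zero: "\<And>x. x \<notin> {a<..<b} \<Longrightarrow> \<phi> x = 0 \<and> deriv \<phi> x = 0"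
    using test_fun_support[OF \<phi>] by blast
  have "compact (\<phi> ` {a..b})"
    by (rule compact_continuous_image[OF test_fun_continuous(1)[OF \<phi>]]) simp
  then obtain K where K: "0 < K" "\<forall>y\<in>\<phi> ` {a..b}. norm y \<le> K"
    using compact_imp_bounded bounded_pos by metis
  have bound: "\<bar>\<phi> x\<bar> \<le> K" for x
    using K zero[of x] by (cases "x \<in> {a..b}") auto
  show ?thesis
  proof (rule Bochner_Integration.integrable_bound[where f="\<lambda>x. K * \<bar>g x\<bar>"])
    show "integrable I01 (\<lambda>x. K * \<bar>g x\<bar>)" using g by auto
    have "\<phi> \<in> borel_measurable I01"
      by (rule borel_measurable_I01_if_continuous[OF test_fun_continuous(1)[OF \<phi>]])
    then show "(\<lambda>x. g x * \<phi> x) \<in> borel_measurable I01"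
      using borel_measurable_integrable[OF g] by measurable
    have "norm (g x * \<phi> x) \<le> norm (K * \<bar>g x\<bar>)" for x
    proof -
      have "\<bar>g x\<bar> * \<bar>\<phi> x\<bar> \<le> \<bar>g x\<bar> * K" using bound by (rule mult_left_mono) simp
      then show ?thesis using K by (simp add: abs_mult mult.commute)
    qed
    then show "AE x in I01. norm (g x * \<phi> x) \<le> norm (K * \<bar>g x\<bar>)" by simp
  qed
qed

lemma weak_deriv_if_has_derivative:
  fixes u u' :: "real \<Rightarrow> real"
  assumes du: "\<And>x. (u has_real_derivative u' x) (at x)" and cu': "continuous_on UNIV u'"
  shows "weak_deriv u u'"
  unfolding weak_deriv_def
proof (intro allI impI)
  fix \<phi> :: "real \<Rightarrow> real" assume \<phi>: "test_fun \<phi>"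
  obtain a b where ab: "0 < a" "a < b" "b < 1"
    and zero: "\<And>x. x \<notin> {a<..<b} \<Longrightarrow> \<phi> x = 0 \<and> deriv \<phi> x = 0"
    using test_fun_support[OF \<phi>] by blast
  note d\<phi> = test_fun_has_derivative[OF \<phi>]
  note c0 = test_fun_continuous(1)[OF \<phi>, of UNIV] and c1 = test_fun_continuous(2)[OF \<phi>, of UNIV]
  have cu: "continuous_on UNIV u"
    using du by (meson DERIV_continuous continuous_at_imp_continuous_on)
  have "((\<lambda>x. u' x * \<phi> x + u x * deriv \<phi> x) has_integral u b * \<phi> b - u a * \<phi> a) {a..b}"
    using ab DERIV_mult[OF du d\<phi>]
    by (intro fundamental_theorem_of_calculus)
      (auto simp: has_real_derivative_iff_has_vector_derivative mult.commute
        intro: has_vector_derivative_at_within)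
  then have "integral {a..b} (\<lambda>x. u' x * \<phi> x) + integral {a..b} (\<lambda>x. u x * deriv \<phi> x) = 0"
    using zero[of a] zero[of b]
    by (subst integral_add[symmetric])
      (auto simp: integral_unique intro!: integrable_continuous_interval continuous_intros
        continuous_on_subset[OF cu] continuous_on_subset[OF cu'] continuous_on_subset[OF c0]
        continuous_on_subset[OF c1])
  moreover have "(LINT x|I01. u x * deriv \<phi> x) = integral {a..b} (\<lambda>x. u x * deriv \<phi> x)"
    using ab zero
    by (intro integral_I01_compact_support(2))
      (auto intro!: continuous_intros continuous_on_subset[OF cu] continuous_on_subset[OF c1])
  moreover have "(LINT x|I01. u' x * \<phi> x) = integral {a..b} (\<lambda>x. u' x * \<phi> x)"
    using ab zero
    by (intro integral_I01_compact_support(2))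
      (auto intro!: continuous_intros continuous_on_subset[OF cu'] continuous_on_subset[OF c0])
  ultimately show "(LINT x|I01. u x * deriv \<phi> x) = - (LINT x|I01. u' x * \<phi> x)" by simp
qed

lemma d2_props:
  assumes "W2p p w"
  shows "Lp p (d2 p w)" "weak_deriv (deriv w) (d2 p w)"
proof -
  from assms obtain g where "Lp p g \<and> weak_deriv (deriv w) g" by (auto simp: W2p_def)
  then have "Lp p (d2 p w) \<and> weak_deriv (deriv w) (d2 p w)"
    unfolding d2_def by (rule someI[where P="\<lambda>g. Lp p g \<and> weak_deriv (deriv w) g"])
  then show "Lp p (d2 p w)" "weak_deriv (deriv w) (d2 p w)" by auto
qed

lemma d2_AE_eq:
  assumes p: "1 \<le> p" and w: "W2p p w" and G: "Lp p G" "weak_deriv (deriv w) G"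
  shows "AE x in I01. d2 p w x = G x"
  using w d2_props[OF w] G
  by (intro weak_deriv_unique_AE) (auto simp: W2p_def intro: Lp_imp_integrable[OF p])

section \<open>Adding a monomial to an admissible profile\<close>

lemma weak_deriv_cong:
  assumes "\<And>x. x \<in> {0<..<1} \<Longrightarrow> f x = f' x" "weak_deriv f g"
  shows "weak_deriv f' g"
proof -
  have "(LINT x|I01. f' x * deriv \<phi> x) = (LINT x|I01. f x * deriv \<phi> x)" for \<phi>
    using assms(1) by (intro Bochner_Integration.integral_cong) auto
  then show ?thesis using assms(2) by (simp add: weak_deriv_def)
qed

lemma weak_deriv_add_C1:
  fixes f g u u' :: "real \<Rightarrow> real"
  assumes fg: "weak_deriv f g" and f: "continuous_on {0<..<1} f" and g: "integrable I01 g"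
    and du: "\<And>x. (u has_real_derivative u' x) (at x)" and u': "continuous_on UNIV u'"
  shows "weak_deriv (\<lambda>x. f x + u x) (\<lambda>x. g x + u' x)"
  unfolding weak_deriv_def
proof (intro allI impI)
  fix \<phi> :: "real \<Rightarrow> real" assume \<phi>: "test_fun \<phi>"
  obtain a b where ab: "0 < a" "a < b" "b < 1"
    and zero: "\<And>x. x \<notin> {a<..<b} \<Longrightarrow> \<phi> x = 0 \<and> deriv \<phi> x = 0"
    using test_fun_support[OF \<phi>] by blast
  have u: "continuous_on UNIV u"
    using du by (meson DERIV_continuous continuous_at_imp_continuous_on)
  have "integrable I01 (\<lambda>x. h x * deriv \<phi> x)" if "continuous_on {0<..<1} h" for h
    using ab zero that
    by (intro integral_I01_compact_support(1)[of _ a b]) (auto intro!: continuous_intros test_fun_continuous[OF \<phi>])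
  then have "(LINT x|I01. (f x + u x) * deriv \<phi> x) = (LINT x|I01. f x * deriv \<phi> x) + (LINT x|I01. u x * deriv \<phi> x)"
    using f continuous_on_subset[OF u] by (simp add: distrib_right)
  also have "\<dots> = - (LINT x|I01. g x * \<phi> x) - (LINT x|I01. u' x * \<phi> x)"
    using fg weak_deriv_if_has_derivative[OF du u'] \<phi> by (simp add: weak_deriv_def)
  also have "\<dots> = - (LINT x|I01. (g x + u' x) * \<phi> x)"
  proof -
    have "integrable I01 (\<lambda>x. u' x * \<phi> x)"
      using ab zero u' by (intro integral_I01_compact_support(1)[of _ a b])
        (auto intro!: continuous_intros test_fun_continuous[OF \<phi>] elim: continuous_on_subset)
    then show ?thesis using integrable_mult_test_fun[OF g \<phi>] by (simp add: distrib_right)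
  qed
  finally show "(LINT x|I01. (f x + u x) * deriv \<phi> x) = - (LINT x|I01. (g x + u' x) * \<phi> x)" .
qed

lemma Lp_monomial: "0 \<le> p \<Longrightarrow> Lp p (\<lambda>y. C * y ^ m)"
  by (intro Lp_continuous_bounded[where B="\<bar>C\<bar>"])
    (auto intro!: continuous_intros mult_left_le simp: abs_mult power_le_one)

lemma deriv_monomial_has_derivative:
  "((\<lambda>y. c * real k * y ^ (k - 1)) has_real_derivative c * real k * real (k - 1) * x ^ (k - 2)) (at x)"
proof -
  have "((\<lambda>y. c * real k * y ^ (k - 1)) has_real_derivative c * real k * (real (k - 1) * x ^ (k - 1 - 1))) (at x)"
    by (auto intro!: derivative_eq_intros)
  moreover have "k - 1 - 1 = k - 2" by simp
  ultimately show ?thesis by (simp add: mult.assoc)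
qed

lemma add_monomial_has_derivative:
  "w differentiable (at x) \<Longrightarrow>
    ((\<lambda>y. w y + c * y ^ k) has_real_derivative deriv w x + c * real k * x ^ (k - 1)) (at x)"
  by (auto intro!: derivative_eq_intros simp: DERIV_deriv_iff_real_differentiable)

lemma W2p_add_monomial:
  fixes w :: "real \<Rightarrow> real" and c :: real and k :: nat
  assumes p: "1 \<le> p" and w: "W2p p w"
  defines "v \<equiv> \<lambda>y. w y + c * y ^ k"
  shows "W2p p v"
    and "\<And>x. x \<in> {0<..<1} \<Longrightarrow> deriv v x = deriv w x + c * real k * x ^ (k - 1)"
    and "AE y in I01. d2 p v y = d2 p w y + c * real k * real (k - 1) * y ^ (k - 2)"
proof -
  define u1 where "u1 y = c * real k * y ^ (k - 1)" for y
  define u2 where "u2 y = c * real k * real (k - 1) * y ^ (k - 2)" for y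
  have wd: "\<And>x. x \<in> {0<..<1} \<Longrightarrow> w differentiable (at x)" and w': "continuous_on {0<..<1} (deriv w)"
    and wLp: "Lp p w" "Lp p (deriv w)"
    using w by (auto simp: W2p_def)
  show v': "deriv v x = deriv w x + u1 x" if "x \<in> {0<..<1}" for x
    unfolding v_def u1_def using add_monomial_has_derivative[OF wd[OF that]] by (rule DERIV_imp_deriv)
  have "weak_deriv (\<lambda>x. deriv w x + u1 x) (\<lambda>x. d2 p w x + u2 x)"
    using d2_props[OF w] w' deriv_monomial_has_derivative Lp_imp_integrable[OF p]
    by (intro weak_deriv_add_C1) (auto simp: u1_def u2_def intro!: continuous_intros)
  then have G: "weak_deriv (deriv v) (\<lambda>x. d2 p w x + u2 x)"
    by (rule weak_deriv_cong[rotated]) (simp add: v')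
  have LpG: "Lp p (\<lambda>x. d2 p w x + u2 x)"
    using p d2_props(1)[OF w] Lp_monomial unfolding u2_def by (intro Lp_add) auto
  show W: "W2p p v"
    unfolding W2p_def
  proof (intro conjI)
    show "\<forall>x\<in>{0<..<1}. v differentiable (at x)"
      using add_monomial_has_derivative wd unfolding v_def real_differentiable_def by blast
    have "continuous_on {0<..<1} (\<lambda>x. deriv w x + u1 x)"
      unfolding u1_def by (intro continuous_intros w')
    then show "continuous_on {0<..<1} (deriv v)"
      using continuous_on_cong[OF refl, of "{0<..<1}" "deriv v" "\<lambda>x. deriv w x + u1 x"] by (simp add: v')
    show "Lp p v" unfolding v_def using p wLp(1) Lp_monomial by (intro Lp_add) auto
    have "Lp p (\<lambda>x. deriv w x + u1 x)"
      unfolding u1_def using p wLp(2) Lp_monomial by (intro Lp_add) auto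
    then show "Lp p (deriv v)" by (rule Lp_cong[rotated]) (simp add: v')
  qed (use LpG G in blast)
  show "AE y in I01. d2 p v y = d2 p w y + u2 y" by (rule d2_AE_eq[OF p W LpG G])
qed

lemma Jprime_add_monomial:
  fixes w :: "real \<Rightarrow> real"
  assumes p: "1 \<le> p" and w: "w \<in> Jprime p s" and k: "2 \<le> k"
  shows "(\<lambda>y. w y + c * y ^ k) \<in> Jprime p (s + c)"
proof -
  let ?v = "\<lambda>y. w y + c * y ^ k"
  have W: "W2p p w" and lim: "(w \<longlongrightarrow> -1) (at_right 0)" "(w \<longlongrightarrow> s) (at_left 1)"
    "(deriv w \<longlongrightarrow> 0) (at_right 0)"
    using w by (auto simp: Jprime_def)
  have "(?v \<longlongrightarrow> -1 + c * 0 ^ k) (at_right 0)" "(?v \<longlongrightarrow> s + c * 1 ^ k) (at_left 1)"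
    by (intro tendsto_intros lim)+
  moreover have "((\<lambda>y. deriv w y + c * real k * y ^ (k - 1)) \<longlongrightarrow> 0 + c * real k * 0 ^ (k - 1)) (at_right 0)"
    by (intro tendsto_intros lim)
  then have "((\<lambda>y. deriv w y + c * real k * y ^ (k - 1)) \<longlongrightarrow> 0) (at_right 0)"
    using k by (simp add: power_0_left)
  then have "(deriv ?v \<longlongrightarrow> 0) (at_right 0)"
    by (rule Lim_transform_eventually)
      (auto simp: W2p_add_monomial(2)[OF p W] eventually_at_right_field intro!: exI[of _ 1])
  ultimately show ?thesis using k W2p_add_monomial(1)[OF p W] by (simp add: Jprime_def power_0_left)
qed

lemma const_in_Jprime:
  assumes p: "1 \<le> p"
  shows "(\<lambda>_. -1) \<in> Jprime p (-1)" "AE y in I01. d2 p (\<lambda>_. -1) y = 0"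
proof -
  have d: "deriv (\<lambda>_::real. -1::real) = (\<lambda>_. 0)" by (rule deriv_eq_if_has_derivative) simp
  have Lp0: "Lp p (\<lambda>_. 0)" and "Lp p (\<lambda>_. -1)"
    using p Lp_monomial[of p 0 0] Lp_monomial[of p "-1" 0] by auto
  moreover have wd: "weak_deriv (deriv (\<lambda>_::real. -1::real)) (\<lambda>_. 0)" by (simp add: d weak_deriv_def)
  ultimately have W: "W2p p (\<lambda>_. -1)" unfolding W2p_def by (auto simp: d)
  then show "(\<lambda>_. -1) \<in> Jprime p (-1)" by (simp add: Jprime_def d)
  show "AE y in I01. d2 p (\<lambda>_. -1) y = 0" by (rule d2_AE_eq[OF p W Lp0 wd])
qed

section \<open>The two energies\<close>

definition pot_energy :: "(real \<Rightarrow> real) \<Rightarrow> ennreal" where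
  "pot_energy w = (\<integral>\<^sup>+ y. ennreal (((w y)\<^sup>2 - 1)\<^sup>2) \<partial>I01)"

definition bend_energy :: "real \<Rightarrow> (real \<Rightarrow> real) \<Rightarrow> ennreal" where
  "bend_energy p w = (\<integral>\<^sup>+ y. ennreal ((d2 p w y)\<^sup>2) \<partial>I01)"

lemma Phi_eq_energies: "Phi p w = epow (pot_energy w) (3/4) * epow (bend_energy p w) (1/4)"
  by (simp add: Phi_def pot_energy_def bend_energy_def)

lemma Phi_eq_ennreal:
  assumes "pot_energy w = ennreal a" "bend_energy p w = ennreal b" "0 \<le> a" "0 \<le> b"
  shows "Phi p w = ennreal (a powr (3/4) * b powr (1/4))"
  using assms by (simp add: Phi_eq_energies epow_def ennreal_mult)

lemma nn_integral_I01_monomial: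
  fixes C :: real
  assumes C: "0 \<le> C"
  shows "(\<integral>\<^sup>+ y. ennreal (C * y ^ m) \<partial>I01) = ennreal (C / real (Suc m))"
proof -
  have "((\<lambda>y. C * y ^ Suc m / real (Suc m)) has_real_derivative C * x ^ m) (at x)" for x
    using DERIV_cdivide[OF DERIV_cmult[OF DERIV_pow[of "Suc m" x]], of C "real (Suc m)"] by simp
  then have "((\<lambda>y. C * y ^ m) has_integral C * 1 ^ Suc m / real (Suc m) - C * 0 ^ Suc m / real (Suc m)) {0..1}"
    by (intro fundamental_theorem_of_calculus)
      (auto simp: has_real_derivative_iff_has_vector_derivative[symmetric] intro: DERIV_subset)
  then have "((\<lambda>y. C * y ^ m) has_integral C / real (Suc m)) {0<..<1}"
    by (simp add: has_integral_Icc_iff_Ioo[symmetric])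
  from nn_integral_has_integral_lebesgue'[OF _ this]
  have "(\<integral>\<^sup>+ y. ennreal (C * y ^ m) * indicator {0<..<1} y \<partial>lborel) = ennreal (C / real (Suc m))"
    using C by simp
  moreover have "(\<integral>\<^sup>+ y. ennreal (C * y ^ m) \<partial>I01)
      = (\<integral>\<^sup>+ y. ennreal (C * y ^ m) * indicator {0<..<1} y \<partial>lborel)"
    by (simp add: nn_integral_restrict_space nn_integral_completion)
  ultimately show ?thesis by simp
qed

lemma square_add_le:
  fixes u v \<tau> :: real
  assumes "0 < \<tau>"
  shows "(u + v)\<^sup>2 \<le> (1 + \<tau>) * u\<^sup>2 + (1 + 1 / \<tau>) * v\<^sup>2"
proof -
  have "0 \<le> (\<tau> * u - v)\<^sup>2 / \<tau>" using assms by simp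
  also have "(\<tau> * u - v)\<^sup>2 / \<tau> = \<tau> * u\<^sup>2 - 2 * u * v + v\<^sup>2 / \<tau>"
    using assms by (simp add: field_simps power2_eq_square)
  finally show ?thesis using assms by (simp add: field_simps power2_eq_square)
qed

text \<open>No bound on \<open>w\<close> is available, so \<open>w\<^sup>2 z\<^sup>2\<close> is traded for \<open>(w\<^sup>2 - 1)\<^sup>2\<close> and powers of \<open>z\<close>.\<close>

lemma cross_term_square_le:
  fixes w z \<mu> :: real
  assumes \<mu>: "0 < \<mu>"
  shows "(2 * w * z + z\<^sup>2)\<^sup>2 \<le> 4 * (w\<^sup>2 - 1)\<^sup>2 / \<mu> + (4 * \<mu> + 2) * z ^ 4 + 8 * z\<^sup>2"
proof -
  define F where "F = w\<^sup>2 - 1"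
  have "0 \<le> (2 * w * z - z\<^sup>2)\<^sup>2" by simp
  then have s1: "(2 * w * z + z\<^sup>2)\<^sup>2 \<le> 8 * (w\<^sup>2 * z\<^sup>2) + 2 * z ^ 4"
    by (simp add: power2_eq_square algebra_simps power4_eq_xxxx)
  have "w\<^sup>2 * z\<^sup>2 \<le> (\<bar>F\<bar> + 1) * z\<^sup>2" by (intro mult_right_mono) (auto simp: F_def)
  then have s2: "w\<^sup>2 * z\<^sup>2 \<le> \<bar>F\<bar> * z\<^sup>2 + z\<^sup>2" by (simp add: algebra_simps)
  have "0 \<le> (\<bar>F\<bar> - \<mu> * z\<^sup>2)\<^sup>2 / \<mu>" using \<mu> by simp
  also have "(\<bar>F\<bar> - \<mu> * z\<^sup>2)\<^sup>2 / \<mu> = F\<^sup>2 / \<mu> - 2 * (\<bar>F\<bar> * z\<^sup>2) + \<mu> * z ^ 4"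
    using \<mu> by (simp add: field_simps power2_eq_square power4_eq_xxxx)
  finally have s3: "2 * (\<bar>F\<bar> * z\<^sup>2) \<le> F\<^sup>2 / \<mu> + \<mu> * z ^ 4" by simp
  have "4 * (w\<^sup>2 - 1)\<^sup>2 / \<mu> + (4 * \<mu> + 2) * z ^ 4 + 8 * z\<^sup>2
      = 4 * (F\<^sup>2 / \<mu>) + 4 * (\<mu> * z ^ 4) + 2 * z ^ 4 + 8 * z\<^sup>2"
    by (simp add: F_def algebra_simps)
  then show ?thesis using s1 s2 s3 by linarith
qed

lemma pot_density_add_le:
  fixes w z \<tau> \<mu> :: real
  assumes \<tau>: "0 < \<tau>" and \<mu>: "0 < \<mu>"
  shows "((w + z)\<^sup>2 - 1)\<^sup>2 \<le> (1 + \<tau> + (1 + 1 / \<tau>) * (4 / \<mu>)) * (w\<^sup>2 - 1)\<^sup>2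
           + (1 + 1 / \<tau>) * ((4 * \<mu> + 2) * z ^ 4 + 8 * z\<^sup>2)"
proof -
  have "((w + z)\<^sup>2 - 1)\<^sup>2 = ((w\<^sup>2 - 1) + (2 * w * z + z\<^sup>2))\<^sup>2"
    by (simp add: power2_eq_square algebra_simps)
  also have "\<dots> \<le> (1 + \<tau>) * (w\<^sup>2 - 1)\<^sup>2 + (1 + 1 / \<tau>) * (2 * w * z + z\<^sup>2)\<^sup>2"
    by (rule square_add_le[OF \<tau>])
  also have "\<dots> \<le> (1 + \<tau>) * (w\<^sup>2 - 1)\<^sup>2 + (1 + 1 / \<tau>) * (4 * (w\<^sup>2 - 1)\<^sup>2 / \<mu> + (4 * \<mu> + 2) * z ^ 4 + 8 * z\<^sup>2)"
    using \<tau> by (intro add_left_mono mult_left_mono cross_term_square_le[OF \<mu>]) auto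
  finally show ?thesis by (simp add: algebra_simps)
qed

lemma nn_integral_I01_le_lincomb:
  fixes f F R :: "real \<Rightarrow> real"
  assumes m: "F \<in> borel_measurable I01" "R \<in> borel_measurable I01"
    and nonneg: "\<And>y. 0 \<le> F y" "\<And>y. 0 \<le> R y" "0 \<le> \<alpha>" "0 \<le> \<beta>"
    and le: "\<And>y. y \<in> {0<..<1} \<Longrightarrow> f y \<le> \<alpha> * F y + \<beta> * R y"
    and int: "(\<integral>\<^sup>+ y. F y \<partial>I01) = ennreal A" "(\<integral>\<^sup>+ y. R y \<partial>I01) = ennreal B" "0 \<le> A" "0 \<le> B"
  shows "(\<integral>\<^sup>+ y. ennreal (f y) \<partial>I01) \<le> ennreal (\<alpha> * A + \<beta> * B)"
proof -
  have "ennreal (f y) \<le> ennreal (\<alpha> * F y + \<beta> * R y)" if "y \<in> space I01" for y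
    using le that by (intro ennreal_leI) simp
  then have "(\<integral>\<^sup>+ y. ennreal (f y) \<partial>I01) \<le> (\<integral>\<^sup>+ y. ennreal \<alpha> * ennreal (F y) + ennreal \<beta> * ennreal (R y) \<partial>I01)"
    using nonneg by (intro nn_integral_mono) (simp add: ennreal_mult)
  also have "\<dots> = ennreal \<alpha> * (\<integral>\<^sup>+ y. F y \<partial>I01) + ennreal \<beta> * (\<integral>\<^sup>+ y. R y \<partial>I01)"
    using m by (simp add: nn_integral_add nn_integral_cmult)
  also have "\<dots> = ennreal (\<alpha> * A + \<beta> * B)"
    using int nonneg by (simp add: ennreal_mult ennreal_plus)
  finally show ?thesis .
qed

lemma pot_energy_add_monomial_le:
  fixes w :: "real \<Rightarrow> real"
  assumes w: "w \<in> borel_measurable I01" and a: "pot_energy w = ennreal a" "0 \<le> a"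
    and \<tau>: "0 < \<tau>" and \<mu>: "0 < \<mu>"
  shows "pot_energy (\<lambda>y. w y + c * y ^ k) \<le> ennreal ((1 + \<tau>) * a
    + (1 + 1/\<tau>) * (4 * a / \<mu> + (4 * \<mu> + 2) * (c ^ 4 / real (Suc (4 * k))) + 8 * (c\<^sup>2 / real (Suc (2 * k)))))"
proof -
  define R where "R y = (4 * \<mu> + 2) * c ^ 4 * y ^ (4 * k) + 8 * c\<^sup>2 * y ^ (2 * k)" for y :: real
  have pow_nonneg: "0 \<le> y ^ (4 * k)" "0 \<le> y ^ (2 * k)" for y :: real
    by (simp_all add: power_mult)
  have "(\<integral>\<^sup>+ y. R y \<partial>I01)
      = (\<integral>\<^sup>+ y. ennreal ((4 * \<mu> + 2) * c ^ 4 * y ^ (4 * k)) \<partial>I01) + (\<integral>\<^sup>+ y. ennreal (8 * c\<^sup>2 * y ^ (2 * k)) \<partial>I01)"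
    unfolding R_def using \<mu> pow_nonneg
    by (subst nn_integral_add[symmetric])
      (auto simp: zero_le_even_power intro!: borel_measurable_I01_if_continuous continuous_intros)
  also have "\<dots> = ennreal ((4 * \<mu> + 2) * (c ^ 4 / real (Suc (4 * k))) + 8 * (c\<^sup>2 / real (Suc (2 * k))))"
    using \<mu> by (simp add: nn_integral_I01_monomial zero_le_even_power)
  finally have R: "(\<integral>\<^sup>+ y. R y \<partial>I01) = ennreal ((4 * \<mu> + 2) * (c ^ 4 / real (Suc (4 * k))) + 8 * (c\<^sup>2 / real (Suc (2 * k))))" .
  have "pot_energy (\<lambda>y. w y + c * y ^ k) \<le> ennreal ((1 + \<tau> + (1 + 1 / \<tau>) * (4 / \<mu>)) * a
      + (1 + 1 / \<tau>) * ((4 * \<mu> + 2) * (c ^ 4 / real (Suc (4 * k))) + 8 * (c\<^sup>2 / real (Suc (2 * k)))))"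
    unfolding pot_energy_def
  proof (rule nn_integral_I01_le_lincomb[OF _ _ _ _ _ _ _ a(1)[unfolded pot_energy_def] R a(2)])
    show "((w y + c * y ^ k)\<^sup>2 - 1)\<^sup>2 \<le> (1 + \<tau> + (1 + 1 / \<tau>) * (4 / \<mu>)) * ((w y)\<^sup>2 - 1)\<^sup>2
        + (1 + 1 / \<tau>) * R y" for y
      using pot_density_add_le[OF \<tau> \<mu>, of "w y" "c * y ^ k"]
      by (simp add: R_def power_mult_distrib power_mult[symmetric] mult_ac)
    show "0 \<le> R y" for y
      using \<mu> pow_nonneg[of y] by (auto simp: R_def zero_le_even_power intro!: add_nonneg_nonneg mult_nonneg_nonneg)
    show "R \<in> borel_measurable I01"
      unfolding R_def by (intro borel_measurable_I01_if_continuous continuous_intros)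
  qed (use w \<tau> \<mu> in auto)
  then show ?thesis by (simp add: algebra_simps)
qed

lemma bend_energy_add_monomial_le:
  fixes w :: "real \<Rightarrow> real"
  assumes p: "1 \<le> p" and w: "W2p p w" and b: "bend_energy p w = ennreal b" "0 \<le> b"
    and k: "2 \<le> k" and \<tau>: "0 < \<tau>"
  shows "bend_energy p (\<lambda>y. w y + c * y ^ k)
    \<le> ennreal ((1 + \<tau>) * b + (1 + 1/\<tau>) * ((c * real k * real (k - 1))\<^sup>2 / real (Suc (2 * k - 4))))"
proof -
  define C where "C = (c * real k * real (k - 1))\<^sup>2"
  have even_pow: "(y ^ (k - 2))\<^sup>2 = y ^ (2 * k - 4)" for y :: real
    by (simp add: power_mult[symmetric] algebra_simps)
  have "bend_energy p (\<lambda>y. w y + c * y ^ k)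
      = (\<integral>\<^sup>+ y. ennreal ((d2 p w y + c * real k * real (k - 1) * y ^ (k - 2))\<^sup>2) \<partial>I01)"
    unfolding bend_energy_def
    by (intro nn_integral_cong_AE) (use W2p_add_monomial(3)[OF p w, of c k] in \<open>eventually_elim, simp\<close>)
  also have "\<dots> \<le> ennreal ((1 + \<tau>) * b + (1 + 1/\<tau>) * (C / real (Suc (2 * k - 4))))"
  proof (rule nn_integral_I01_le_lincomb)
    show "(d2 p w y + c * real k * real (k - 1) * y ^ (k - 2))\<^sup>2 \<le> (1 + \<tau>) * (d2 p w y)\<^sup>2 + (1 + 1 / \<tau>) * (C * y ^ (2 * k - 4))"
      for y
    proof -
      have "(c * real k * real (k - 1) * y ^ (k - 2))\<^sup>2 = C * y ^ (2 * k - 4)"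
        by (simp add: C_def power_mult_distrib even_pow)
      then show ?thesis using square_add_le[OF \<tau>, of "d2 p w y" "c * real k * real (k - 1) * y ^ (k - 2)"]
        by simp
    qed
    show "(\<lambda>y. (d2 p w y)\<^sup>2) \<in> borel_measurable I01"
    proof -
      have "d2 p w \<in> borel_measurable I01" using d2_props(1)[OF w] by (simp add: Lp_def)
      then show ?thesis by measurable
    qed
    show "(\<integral>\<^sup>+ y. ennreal ((d2 p w y)\<^sup>2) \<partial>I01) = ennreal b" using b by (simp add: bend_energy_def)
    show "(\<integral>\<^sup>+ y. ennreal (C * y ^ (2 * k - 4)) \<partial>I01) = ennreal (C / real (Suc (2 * k - 4)))"
      by (simp add: C_def nn_integral_I01_monomial)
  qed (use b \<tau> even_pow in \<open>auto simp: C_def intro!: borel_measurable_I01_if_continuous continuous_intros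
        simp flip: even_pow\<close>)
  finally show ?thesis by (simp add: C_def)
qed

lemma powr_three_quarters_le:
  fixes x y \<theta> :: real
  assumes x: "0 \<le> x" and y: "0 \<le> y" and \<theta>: "0 < \<theta>"
  shows "x powr (3/4) * y powr (1/4) \<le> (3 * \<theta> * x + y / \<theta> ^ 3) / 4"
proof (cases "x = 0 \<or> y = 0")
  case True
  then have "x powr (3/4) * y powr (1/4) = 0" by auto
  moreover have "0 \<le> (3 * \<theta> * x + y / \<theta> ^ 3) / 4" using x y \<theta> by simp
  ultimately show ?thesis by linarith
next
  case False
  have "(\<theta> ^ 3) powr (1/4) = (\<theta> powr 3) powr (1/4)" using \<theta> by (simp add: powr_numeral)
  also have "\<dots> = \<theta> powr (3/4)" by (simp add: powr_powr)
  finally have "(\<theta> * x) powr (3/4) * (y / \<theta> ^ 3) powr (1/4)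
      = (\<theta> powr (3/4) * x powr (3/4)) * (y powr (1/4) / \<theta> powr (3/4))"
    using x y \<theta> by (simp add: powr_mult powr_divide)
  also have "\<dots> = x powr (3/4) * y powr (1/4)" using \<theta> by simp
  finally have eq: "(\<theta> * x) powr (3/4) * (y / \<theta> ^ 3) powr (1/4) = x powr (3/4) * y powr (1/4)" .
  have "(\<theta> * x) powr (3/4) * (y / \<theta> ^ 3) powr (1/4) \<le> 3/4 * (\<theta> * x) + 1/4 * (y / \<theta> ^ 3)"
    using False x y \<theta> by (intro Youngs_inequality_0) auto
  then show ?thesis unfolding eq by simp
qed

lemma Phi_le_of_energies_le:
  assumes A: "pot_energy w \<le> ennreal A" and B: "bend_energy p w \<le> ennreal B"
    and nonneg: "0 \<le> A" "0 \<le> B" and \<theta>: "0 < \<theta>"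
  shows "Phi p w \<le> ennreal ((3 * \<theta> * A + B / \<theta> ^ 3) / 4)"
proof -
  obtain a where a: "pot_energy w = ennreal a" "0 \<le> a" "a \<le> A"
    using A nonneg by (cases "pot_energy w") (auto simp: top_unique)
  obtain b where b: "bend_energy p w = ennreal b" "0 \<le> b" "b \<le> B"
    using B nonneg by (cases "bend_energy p w") (auto simp: top_unique)
  have "a powr (3/4) * b powr (1/4) \<le> A powr (3/4) * B powr (1/4)"
    using a b by (intro mult_mono powr_mono2) auto
  also have "\<dots> \<le> (3 * \<theta> * A + B / \<theta> ^ 3) / 4" by (rule powr_three_quarters_le[OF nonneg \<theta>])
  finally show ?thesis using Phi_eq_ennreal[OF a(1) b(1) a(2) b(2)] by (simp add: ennreal_leI)
qed

text \<open>The Young bound \<open>(3 \<theta> A + B / \<theta>\<^sup>3) / 4\<close> of \<open>powr_three_quarters_le\<close>, evaluated at the energy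
  bounds \<open>A\<close>, \<open>B\<close> for \<open>w + c y\<^sup>k\<close> from the two lemmas above.\<close>

definition perturbed_Phi_bound :: "real \<Rightarrow> real \<Rightarrow> real \<Rightarrow> nat \<Rightarrow> real \<Rightarrow> real \<Rightarrow> real \<Rightarrow> real" where
  "perturbed_Phi_bound \<tau> \<mu> \<theta> k a b c =
    (3 * \<theta> * ((1 + \<tau>) * a + (1 + 1/\<tau>) * (4 * a / \<mu> + (4 * \<mu> + 2) * (c ^ 4 / real (Suc (4 * k)))
        + 8 * (c\<^sup>2 / real (Suc (2 * k)))))
     + ((1 + \<tau>) * b + (1 + 1/\<tau>) * ((c * real k * real (k - 1))\<^sup>2 / real (Suc (2 * k - 4)))) / \<theta> ^ 3) / 4"

lemma Phi_add_monomial_le: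
  fixes w :: "real \<Rightarrow> real"
  assumes p: "1 \<le> p" and w: "W2p p w" and k: "2 \<le> k"
    and a: "pot_energy w = ennreal a" "0 \<le> a" and b: "bend_energy p w = ennreal b" "0 \<le> b"
    and \<tau>: "0 < \<tau>" and \<mu>: "0 < \<mu>" and \<theta>: "0 < \<theta>"
  shows "Phi p (\<lambda>y. w y + c * y ^ k) \<le> ennreal (perturbed_Phi_bound \<tau> \<mu> \<theta> k a b c)"
  unfolding perturbed_Phi_bound_def
proof (rule Phi_le_of_energies_le[OF _ bend_energy_add_monomial_le[OF p w b k \<tau>] _ _ \<theta>])
  show "pot_energy (\<lambda>y. w y + c * y ^ k) \<le> ennreal ((1 + \<tau>) * a + (1 + 1/\<tau>) * (4 * a / \<mu>
      + (4 * \<mu> + 2) * (c ^ 4 / real (Suc (4 * k))) + 8 * (c\<^sup>2 / real (Suc (2 * k)))))"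
    using w a \<tau> \<mu> by (intro pot_energy_add_monomial_le) (auto simp: W2p_def Lp_def)
qed (use a b \<tau> \<mu> in \<open>auto intro!: add_nonneg_nonneg mult_nonneg_nonneg simp: zero_le_even_power\<close>)

section \<open>Energy bounds on \<open>J'(s)\<close>\<close>

lemma continuous_AE_I01_eq_0:
  fixes F :: "real \<Rightarrow> real"
  assumes F: "continuous_on {0<..<1} F" and ae: "AE x in I01. F x = 0" and x: "x \<in> {0<..<1}"
  shows "F x = 0"
proof (rule ccontr)
  assume "F x \<noteq> 0"
  define S where "S = {0<..<1} \<inter> F -` (- {0})"
  have "open S" unfolding S_def by (rule continuous_open_preimage[OF F]) auto
  moreover have "AE y in lebesgue. y \<in> {0<..<1} \<longrightarrow> F y = 0"
    using ae by (subst (asm) AE_restrict_space_iff) auto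
  then have "AE y \<in> S in lebesgue. y \<in> {}"
    by eventually_elim (simp add: S_def)
  moreover have "x \<in> S" using x \<open>F x \<noteq> 0\<close> by (simp add: S_def)
  ultimately have "x \<in> {}" by (rule mem_closed_if_AE_lebesgue_open[OF _ closed_empty])
  then show False by simp
qed

lemma Jprime_continuous:
  assumes "w \<in> Jprime p s"
  shows "continuous_on {0<..<1} w"
  using assms by (auto simp: Jprime_def W2p_def intro!: continuous_at_imp_continuous_on
      differentiable_imp_continuous_within)

lemma pot_energy_eq_0_imp_eq_minus_1:
  assumes w: "w \<in> Jprime p s" and zero: "pot_energy w = 0"
  shows "s = -1"
proof -
  have wc: "continuous_on {0<..<1} w" by (rule Jprime_continuous[OF w])
  have "w \<in> borel_measurable I01" using w by (simp add: Jprime_def W2p_def Lp_def)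
  then have ae: "AE y in I01. ((w y)\<^sup>2 - 1)\<^sup>2 = 0"
    using zero unfolding pot_energy_def by (subst (asm) nn_integral_0_iff_AE) auto
  have "((w y)\<^sup>2 - 1)\<^sup>2 = 0" if "y \<in> {0<..<1}" for y
    by (rule continuous_AE_I01_eq_0[OF _ ae that]) (intro continuous_intros wc)
  then have sq: "(w y)\<^sup>2 = 1" if "y \<in> {0<..<1}" for y using that by simp
  have "eventually (\<lambda>y. w y < 0) (at_right 0)"
    using w by (auto simp: Jprime_def intro: order_tendstoD)
  then obtain t0 where t0: "0 < t0" "\<And>t. 0 < t \<Longrightarrow> t < t0 \<Longrightarrow> w t < 0"
    by (auto simp: eventually_at_right_field)
  have "w y = -1" if y: "y \<in> {0<..<1}" for y
  proof (rule ccontr)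
    assume "w y \<noteq> -1"
    with sq[OF y] have "w y = 1" by (metis power2_eq_1_iff)
    define t where "t = min t0 y / 2"
    have t: "0 < t" "t < t0" "t < y" using t0 y by (auto simp: t_def)
    have "continuous_on {t..y} w" by (rule continuous_on_subset[OF wc]) (use t y in auto)
    then obtain z where "t \<le> z" "z \<le> y" "w z = 0"
      using IVT'[of w t 0 y] t0(2)[OF t(1,2)] \<open>w y = 1\<close> t by auto
    then show False using sq[of z] t y by simp
  qed
  then have "((\<lambda>_. -1) \<longlongrightarrow> s) (at_left (1::real))"
    using w by (auto simp: Jprime_def eventually_at_left_field intro!: exI[of _ 0]
        elim!: Lim_transform_eventually)
  then show ?thesis by (simp add: tendsto_const_iff)
qed

lemma le_sqrt_if_le_means:
  fixes x b :: real
  assumes b: "0 \<le> b" and le: "\<And>l. 0 < l \<Longrightarrow> x \<le> (b / l + l) / 2"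
  shows "x \<le> sqrt b"
proof (cases "b = 0")
  case True
  show ?thesis
  proof (rule ccontr)
    assume "\<not> x \<le> sqrt b"
    then have "0 < x" using True by simp
    then show False using le[of x] True by simp
  qed
next
  case False
  then have "0 < sqrt b" using b by simp
  from le[OF this] show ?thesis using b by (simp add: real_div_sqrt)
qed

lemma abs_integral_indicator_le_means:
  fixes g :: "real \<Rightarrow> real"
  assumes g: "integrable I01 g" "integrable I01 (\<lambda>x. (g x)\<^sup>2)" "(LINT x|I01. (g x)\<^sup>2) = b"
    and S: "S \<in> sets lebesgue" and l: "0 < l"
  shows "\<bar>LINT x|I01. indicator S x * g x\<bar> \<le> (b / l + l) / 2"
proof -
  have "\<bar>LINT x|I01. indicator S x * g x\<bar> \<le> (LINT x|I01. \<bar>indicator S x * g x\<bar>)"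
    by (rule integral_abs_bound)
  also have "\<dots> \<le> (LINT x|I01. (g x)\<^sup>2 / (2 * l) + l / 2)"
  proof (rule integral_mono)
    show "integrable I01 (\<lambda>x. \<bar>indicator S x * g x\<bar>)"
      using integrable_I01_indicator_mult[OF g(1) S] by auto
    show "integrable I01 (\<lambda>x. (g x)\<^sup>2 / (2 * l) + l / 2)"
      by (intro Bochner_Integration.integrable_add integrable_divide_zero g(2)
          finite_measure.integrable_const[OF finite_measure_I01])
    fix x
    have "0 \<le> (\<bar>g x\<bar> - l)\<^sup>2 / (2 * l)" using l by simp
    then have "\<bar>g x\<bar> \<le> (g x)\<^sup>2 / (2 * l) + l / 2"
      using l by (simp add: field_simps power2_eq_square)
    then show "\<bar>indicator S x * g x\<bar> \<le> (g x)\<^sup>2 / (2 * l) + l / 2"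
      by (simp add: indicator_def) (meson abs_ge_zero order_trans)
  qed
  also have "\<dots> = b / (2 * l) + l / 2 * measure I01 (space I01)"
    using g(2,3) finite_measure.integrable_const[OF finite_measure_I01]
    by (subst Bochner_Integration.integral_add) auto
  also have "\<dots> = (b / l + l) / 2"
    using emeasure_I01 by (simp add: measure_def field_simps)
  finally show ?thesis .
qed

lemma Jprime_abs_deriv_le:
  assumes p: "1 \<le> p" and w: "w \<in> Jprime p s" and b: "bend_energy p w = ennreal b" "0 \<le> b"
    and y: "0 < y" "y < 1"
  shows "\<bar>deriv w y\<bar> \<le> sqrt b"
proof (rule le_sqrt_if_le_means[OF b(2)])
  fix l :: real assume l: "0 < l"
  have W: "W2p p w" and w'0: "(deriv w \<longlongrightarrow> 0) (at_right 0)" using w by (auto simp: Jprime_def)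
  define g where "g = d2 p w"
  have g: "integrable I01 g" "weak_deriv (deriv w) g"
    using d2_props[OF W] Lp_imp_integrable[OF p] by (auto simp: g_def)
  have "g \<in> borel_measurable I01" using g by auto
  then have g2: "integrable I01 (\<lambda>x. (g x)\<^sup>2)" "(LINT x|I01. (g x)\<^sup>2) = b"
    using nn_integral_eq_integrable[of "\<lambda>x. (g x)\<^sup>2" I01 b] b by (auto simp: bend_energy_def g_def)
  have "\<bar>deriv w y - deriv w a\<bar> \<le> (b / l + l) / 2" if "0 < a" "a < y" for a
    using weak_deriv_integral_eq[of "deriv w" g a y] W g that y
      abs_integral_indicator_le_means[OF g(1) g2, of "{a<..<y}" l] l
    by (simp add: W2p_def)
  moreover have "((\<lambda>a. \<bar>deriv w y - deriv w a\<bar>) \<longlongrightarrow> \<bar>deriv w y - 0\<bar>) (at_right 0)"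
    by (intro tendsto_intros w'0)
  ultimately show "\<bar>deriv w y\<bar> \<le> (b / l + l) / 2"
    using y by (intro tendsto_upperbound[of "\<lambda>a. \<bar>deriv w y - deriv w a\<bar>"])
      (auto simp: eventually_at_right_field intro!: exI[of _ y])
qed

lemma Jprime_bend_energy_ge:
  assumes p: "1 \<le> p" and w: "w \<in> Jprime p s"
  shows "ennreal ((s + 1)\<^sup>2) \<le> bend_energy p w"
proof (cases "bend_energy p w")
  case (real b)
  have lim: "(w \<longlongrightarrow> -1) (at_right 0)" "(w \<longlongrightarrow> s) (at_left 1)"
    and wd: "\<And>x. x \<in> {0<..<1} \<Longrightarrow> w differentiable (at x)"
    using w by (auto simp: Jprime_def W2p_def)
  have step: "\<bar>w y2 - w y1\<bar> \<le> sqrt b" if y: "0 < y1" "y1 < y2" "y2 < 1" for y1 y2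
  proof -
    obtain z where z: "y1 < z" "z < y2" "w y2 - w y1 = (y2 - y1) * deriv w z"
      using MVT2[OF y(2), of w "deriv w"] wd y by (force simp: DERIV_deriv_iff_real_differentiable)
    have "\<bar>w y2 - w y1\<bar> = (y2 - y1) * \<bar>deriv w z\<bar>" using z y by (simp add: abs_mult)
    also have "\<dots> \<le> 1 * sqrt b"
      using Jprime_abs_deriv_le[OF p w real(2) real(1), of z] z y by (intro mult_mono) auto
    finally show ?thesis by simp
  qed
  have left: "\<bar>w y2 - -1\<bar> \<le> sqrt b" if y: "0 < y2" "y2 < 1" for y2
  proof (rule tendsto_upperbound)
    show "((\<lambda>y1. \<bar>w y2 - w y1\<bar>) \<longlongrightarrow> \<bar>w y2 - -1\<bar>) (at_right 0)"
      by (intro tendsto_intros lim)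
    show "eventually (\<lambda>y1. \<bar>w y2 - w y1\<bar> \<le> sqrt b) (at_right 0)"
      using y step by (auto simp: eventually_at_right_field intro!: exI[of _ y2])
  qed simp
  have "\<bar>s - -1\<bar> \<le> sqrt b"
  proof (rule tendsto_upperbound)
    show "((\<lambda>y2. \<bar>w y2 - -1\<bar>) \<longlongrightarrow> \<bar>s - -1\<bar>) (at_left 1)"
      by (intro tendsto_intros lim)
    show "eventually (\<lambda>y2. \<bar>w y2 - -1\<bar> \<le> sqrt b) (at_left 1)"
      using left by (auto simp: eventually_at_left_field intro!: exI[of _ 0])
  qed simp
  then have "(s + 1)\<^sup>2 \<le> b"
    using real by (metis abs_le_square_iff abs_of_nonneg diff_minus_eq_add real_sqrt_abs
        real_sqrt_le_iff real_sqrt_pow2 power2_abs)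
  then show ?thesis using real by simp
qed simp

section \<open>Choice of the perturbation parameters\<close>

lemma monomial_weight_bounds:
  fixes \<theta> :: real and k :: nat
  assumes \<theta>: "0 < \<theta>" and k: "\<theta> \<le> real k" "real k \<le> \<theta> + 3" "2 \<le> k"
  shows "\<theta> / real (Suc (4 * k)) \<le> 1 / 4" "\<theta> / real (Suc (2 * k)) \<le> 1 / 2"
    "(real k * real (k - 1))\<^sup>2 / real (Suc (2 * k - 4)) / \<theta> ^ 3 \<le> (1 + 3 / \<theta>) ^ 3"
proof -
  define x where "x = real k"
  have x: "\<theta> \<le> x" "x \<le> \<theta> + 3" "2 \<le> x" using k by (simp_all add: x_def)
  show "\<theta> / real (Suc (4 * k)) \<le> 1 / 4" "\<theta> / real (Suc (2 * k)) \<le> 1 / 2"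
    using x \<theta> by (simp_all add: x_def field_simps)
  have "2 * 1 \<le> x * (x - 1)" using x by (intro mult_mono) auto
  then have "0 \<le> x\<^sup>2 * (x * (x - 1) - 1)" by simp
  then have "(x * (x - 1))\<^sup>2 \<le> x ^ 3 * (2 * x - 3)"
    by (simp add: power2_eq_square power3_eq_cube algebra_simps)
  moreover have "real (Suc (2 * k - 4)) = 2 * x - 3" "real (k - 1) = x - 1"
    using k by (auto simp: x_def of_nat_diff)
  ultimately have "(real k * real (k - 1))\<^sup>2 / real (Suc (2 * k - 4)) \<le> x ^ 3"
    using x by (simp add: x_def divide_le_eq)
  then have "(real k * real (k - 1))\<^sup>2 / real (Suc (2 * k - 4)) / \<theta> ^ 3 \<le> x ^ 3 / \<theta> ^ 3"
    by (rule divide_right_mono) (use \<theta> in simp)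
  also have "x / \<theta> \<le> 1 + 3 / \<theta>" using x \<theta> by (simp add: field_simps)
  then have "x ^ 3 / \<theta> ^ 3 \<le> (1 + 3 / \<theta>) ^ 3"
    unfolding power_divide[symmetric] using x \<theta> by (intro power_mono) auto
  finally show "(real k * real (k - 1))\<^sup>2 / real (Suc (2 * k - 4)) / \<theta> ^ 3 \<le> (1 + 3 / \<theta>) ^ 3" .
qed

lemma perturbed_Phi_bound_le:
  fixes \<tau> \<mu> \<theta> a b c \<Phi> :: real and k :: nat
  assumes \<tau>: "0 < \<tau>" and \<mu>: "0 < \<mu>" and \<theta>: "0 < \<theta>"
    and \<Phi>: "\<theta> * a = \<Phi>" "b / \<theta> ^ 3 = \<Phi>"
    and k: "\<theta> \<le> real k" "real k \<le> \<theta> + 3" "2 \<le> k" and c: "\<bar>c\<bar> \<le> 1"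
  shows "perturbed_Phi_bound \<tau> \<mu> \<theta> k a b c
    \<le> (1 + \<tau>) * \<Phi> + (1 + 1 / \<tau>) * (3 * \<Phi> / \<mu> + (3 * (2 * \<mu> + 1) / 8 + 3 + (1 + 3 / \<theta>) ^ 3 / 4) * c\<^sup>2)"
proof -
  define T where "T = 1 + 1 / \<tau>"
  define X4 where "X4 = c ^ 4 / real (Suc (4 * k))"
  define X2 where "X2 = c\<^sup>2 / real (Suc (2 * k))"
  define Y where "Y = (c * real k * real (k - 1))\<^sup>2 / real (Suc (2 * k - 4))"
  note weights = monomial_weight_bounds[OF \<theta> k]
  have T: "0 \<le> T" using \<tau> by (simp add: T_def)
  have "c\<^sup>2 \<le> 1" using c by (metis abs_le_square_iff abs_one one_power2)
  then have c4: "c ^ 4 \<le> c\<^sup>2"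
    by (metis mult_left_le power2_eq_square power4_eq_xxxx zero_le_power2 mult.assoc)
  have "\<theta> * X4 = c ^ 4 * (\<theta> / real (Suc (4 * k)))" by (simp add: X4_def)
  also have "\<dots> \<le> c ^ 4 * (1 / 4)" by (intro mult_left_mono weights(1)) simp
  finally have X4: "\<theta> * X4 \<le> c\<^sup>2 / 4" using c4 by simp
  have "\<theta> * X2 = c\<^sup>2 * (\<theta> / real (Suc (2 * k)))" by (simp add: X2_def)
  also have "\<dots> \<le> c\<^sup>2 * (1 / 2)" by (intro mult_left_mono weights(2)) simp
  finally have X2: "\<theta> * X2 \<le> c\<^sup>2 / 2" by simp
  have "Y / \<theta> ^ 3 = c\<^sup>2 * ((real k * real (k - 1))\<^sup>2 / real (Suc (2 * k - 4)) / \<theta> ^ 3)"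
    by (simp add: Y_def power_mult_distrib)
  also have "\<dots> \<le> c\<^sup>2 * (1 + 3 / \<theta>) ^ 3" by (intro mult_left_mono weights(3)) simp
  finally have Y: "Y / \<theta> ^ 3 \<le> c\<^sup>2 * (1 + 3 / \<theta>) ^ 3" .
  have "perturbed_Phi_bound \<tau> \<mu> \<theta> k a b c
      = (1 + \<tau>) * (\<theta> * a) * 3 / 4 + (1 + \<tau>) * (b / \<theta> ^ 3) / 4 + T * (3 * (\<theta> * a) / \<mu>)
        + T * (3 / 4 * (4 * \<mu> + 2)) * (\<theta> * X4) + (6 * T) * (\<theta> * X2) + (T / 4) * (Y / \<theta> ^ 3)"
    unfolding perturbed_Phi_bound_def X4_def[symmetric] X2_def[symmetric] Y_def[symmetric] T_def[symmetric]
    using \<theta> \<mu> by (simp add: field_simps)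
  also have "\<dots> \<le> (1 + \<tau>) * \<Phi> * 3 / 4 + (1 + \<tau>) * \<Phi> / 4 + T * (3 * \<Phi> / \<mu>)
        + T * (3 / 4 * (4 * \<mu> + 2)) * (c\<^sup>2 / 4) + (6 * T) * (c\<^sup>2 / 2) + (T / 4) * (c\<^sup>2 * (1 + 3 / \<theta>) ^ 3)"
    unfolding \<Phi> using T \<mu> X4 X2 Y by (intro add_mono mult_left_mono order_refl) auto
  also have "\<dots> = (1 + \<tau>) * \<Phi> + T * (3 * \<Phi> / \<mu> + (3 * (2 * \<mu> + 1) / 8 + 3 + (1 + 3 / \<theta>) ^ 3 / 4) * c\<^sup>2)"
    by (simp add: field_simps)
  finally show ?thesis by (simp add: T_def)
qed

lemma balancing_ratio:
  fixes a b :: real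
  assumes a: "0 < a" and b: "0 < b"
  defines "\<theta> \<equiv> (b / a) powr (1/4)"
  shows "0 < \<theta>" "\<theta> * a = a powr (3/4) * b powr (1/4)" "b / \<theta> ^ 3 = a powr (3/4) * b powr (1/4)"
proof -
  show "0 < \<theta>" using a b by (simp add: \<theta>_def)
  have \<theta>': "\<theta> = b powr (1/4) / a powr (1/4)" using a b by (simp add: \<theta>_def powr_divide)
  have a1: "a = a powr (1/4) * a powr (3/4)" using a by (simp add: powr_add[symmetric])
  show "\<theta> * a = a powr (3/4) * b powr (1/4)" using a b by (subst a1) (simp add: \<theta>' field_simps)
  have cube: "(x powr (1/4)) ^ 3 = x powr (3/4)" if "0 < x" for x :: real
    using that by (simp add: powr_realpow[symmetric] powr_powr)
  have "b powr (1/4) * b powr (3/4) = b" using b by (simp add: powr_add[symmetric])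
  then have b14: "b / b powr (3/4) = b powr (1/4)" using b by (simp add: field_simps)
  have "\<theta> ^ 3 = b powr (3/4) / a powr (3/4)" using a b by (simp add: \<theta>' power_divide cube)
  then have "b / \<theta> ^ 3 = (b / b powr (3/4)) * a powr (3/4)" by simp
  then show "b / \<theta> ^ 3 = a powr (3/4) * b powr (1/4)" by (simp only: b14 mult.commute)
qed

lemma balancing_ratio_lower_bound:
  fixes a b \<sigma> M :: real
  assumes a: "0 < a" and b: "\<sigma> \<le> b" and \<sigma>: "0 < \<sigma>" and M: "a powr (3/4) * b powr (1/4) \<le> M"
  shows "min 1 (\<sigma> / M) \<le> (b / a) powr (1/4)"
proof (cases "1 \<le> (b / a) powr (1/4)")
  case False
  define \<theta> where "\<theta> = (b / a) powr (1/4)"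
  have \<theta>: "0 < \<theta>" "b / \<theta> ^ 3 = a powr (3/4) * b powr (1/4)"
    using balancing_ratio[OF a] b \<sigma> by (simp_all add: \<theta>_def)
  have "b = (a powr (3/4) * b powr (1/4)) * \<theta> ^ 3" using \<theta> by (simp add: field_simps)
  then have "\<sigma> \<le> M * \<theta> ^ 3"
    using b M \<theta> mult_right_mono[OF M, of "\<theta> ^ 3"] by (simp add: mult.commute)
  also have "\<dots> \<le> M * \<theta>" using False \<theta> M \<sigma> b
    by (intro mult_left_mono) (auto simp: \<theta>_def power_le_one power3_eq_cube mult_le_one intro: order_trans[OF _ M])
  finally have "\<sigma> \<le> M * \<theta>" .
  moreover have "0 < M" using a b \<sigma> M by (smt (verit) powr_gt_zero mult_pos_pos)
  ultimately show ?thesis by (simp add: \<theta>_def min_le_iff_disj divide_le_eq mult.commute)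
qed simp

lemma perturbed_Phi_bound_balanced_le:
  fixes a b c \<sigma> M \<tau> \<mu> :: real
  assumes a: "0 < a" and b: "\<sigma> \<le> b" and \<sigma>: "0 < \<sigma>" and \<Phi>M: "a powr (3/4) * b powr (1/4) \<le> M"
    and \<tau>: "0 < \<tau>" and \<mu>: "0 < \<mu>" and c: "\<bar>c\<bar> \<le> 1"
  defines "\<theta> \<equiv> (b / a) powr (1/4)"
  shows "perturbed_Phi_bound \<tau> \<mu> \<theta> (nat \<lceil>\<theta>\<rceil> + 2) a b c \<le> a powr (3/4) * b powr (1/4) + \<tau> * M
    + (1 + 1 / \<tau>) * (3 * M / \<mu> + (3 * (2 * \<mu> + 1) / 8 + 3 + (1 + 3 / min 1 (\<sigma> / M)) ^ 3 / 4) * c\<^sup>2)"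
proof -
  define \<Phi> where "\<Phi> = a powr (3/4) * b powr (1/4)"
  define k where "k = nat \<lceil>\<theta>\<rceil> + 2"
  have \<theta>: "0 < \<theta>" "\<theta> * a = \<Phi>" "b / \<theta> ^ 3 = \<Phi>"
    using balancing_ratio[OF a] b \<sigma> by (simp_all add: \<theta>_def \<Phi>_def)
  have "real k = of_int \<lceil>\<theta>\<rceil> + 2" using \<theta>(1) by (simp add: k_def)
  moreover have "of_int \<lceil>\<theta>\<rceil> - 1 < \<theta>" "\<theta> \<le> of_int \<lceil>\<theta>\<rceil>" using ceiling_correct[of \<theta>] by auto
  ultimately have k: "\<theta> \<le> real k" "real k \<le> \<theta> + 3" "2 \<le> k" by (linarith, linarith, simp add: k_def)
  have "0 < min 1 (\<sigma> / M)" using \<sigma> \<Phi>M a b by (smt (verit) powr_gt_zero mult_pos_pos zero_less_divide_iff)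
  then have "(1 + 3 / \<theta>) ^ 3 \<le> (1 + 3 / min 1 (\<sigma> / M)) ^ 3"
    using balancing_ratio_lower_bound[OF a b \<sigma> \<Phi>M] \<theta>(1)
    by (intro power_mono add_left_mono divide_left_mono) (auto simp: \<theta>_def)
  moreover have "\<Phi> \<le> M" "0 \<le> \<Phi>" using \<Phi>M by (simp_all add: \<Phi>_def)
  ultimately have "(1 + \<tau>) * \<Phi> + (1 + 1 / \<tau>) * (3 * \<Phi> / \<mu> + (3 * (2 * \<mu> + 1) / 8 + 3 + (1 + 3 / \<theta>) ^ 3 / 4) * c\<^sup>2)
      \<le> \<Phi> + \<tau> * M + (1 + 1 / \<tau>) * (3 * M / \<mu> + (3 * (2 * \<mu> + 1) / 8 + 3 + (1 + 3 / min 1 (\<sigma> / M)) ^ 3 / 4) * c\<^sup>2)"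
    using \<tau> \<mu> by (simp add: algebra_simps add_mono mult_left_mono mult_right_mono divide_right_mono)
  with perturbed_Phi_bound_le[OF \<tau> \<mu> \<theta> k c] show ?thesis by (simp add: \<Phi>_def k_def)
qed

lemma perturbation_parameters:
  fixes M \<sigma> \<epsilon> :: real
  assumes M: "0 < M" and \<sigma>: "0 < \<sigma>" and \<epsilon>: "0 < \<epsilon>"
  obtains \<tau> \<mu> \<delta> where "0 < \<tau>" "0 < \<mu>" "0 < \<delta>"
    "\<And>a b c. 0 < a \<Longrightarrow> \<sigma> \<le> b \<Longrightarrow> a powr (3/4) * b powr (1/4) \<le> M \<Longrightarrow> \<bar>c\<bar> < \<delta> \<Longrightarrow>
       perturbed_Phi_bound \<tau> \<mu> ((b / a) powr (1/4)) (nat \<lceil>(b / a) powr (1/4)\<rceil> + 2) a b c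
         \<le> a powr (3/4) * b powr (1/4) + \<epsilon>"
proof -
  define \<tau> where "\<tau> = \<epsilon> / (4 * M)"
  define T where "T = 1 + 1 / \<tau>"
  define \<mu> where "\<mu> = 12 * T * M / \<epsilon>"
  define Q where "Q = 3 * (2 * \<mu> + 1) / 8 + 3 + (1 + 3 / min 1 (\<sigma> / M)) ^ 3 / 4"
  define \<delta> where "\<delta> = min 1 (sqrt (\<epsilon> / (2 * T * Q)))"
  have \<tau>: "0 < \<tau>" using M \<epsilon> by (simp add: \<tau>_def)
  then have T: "0 < T" by (simp add: T_def add_pos_pos)
  then have \<mu>: "0 < \<mu>" using M \<epsilon> by (simp add: \<mu>_def)
  have Q: "0 < Q" using \<mu> M \<sigma> by (simp add: Q_def add_pos_nonneg)
  have \<delta>: "0 < \<delta>" using \<epsilon> T Q by (simp add: \<delta>_def)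
  have "perturbed_Phi_bound \<tau> \<mu> ((b / a) powr (1/4)) (nat \<lceil>(b / a) powr (1/4)\<rceil> + 2) a b c
      \<le> a powr (3/4) * b powr (1/4) + \<epsilon>"
    if a: "0 < a" and b: "\<sigma> \<le> b" and \<Phi>M: "a powr (3/4) * b powr (1/4) \<le> M" and c: "\<bar>c\<bar> < \<delta>" for a b c
  proof -
    have "\<bar>c\<bar> \<le> 1" "\<bar>c\<bar> \<le> sqrt (\<epsilon> / (2 * T * Q))" using c by (auto simp: \<delta>_def)
    then have "c\<^sup>2 \<le> \<epsilon> / (2 * T * Q)"
      using \<epsilon> T Q by (metis abs_le_square_iff abs_of_nonneg real_sqrt_ge_zero real_sqrt_pow2 zero_le_divide_iff
          less_imp_le mult_pos_pos zero_less_numeral)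
    then have "T * (Q * c\<^sup>2) \<le> T * (Q * (\<epsilon> / (2 * T * Q)))" using T Q by (intro mult_left_mono) auto
    moreover have "\<tau> * M = \<epsilon> / 4" "T * (3 * M / \<mu>) = \<epsilon> / 4" "T * (Q * (\<epsilon> / (2 * T * Q))) = \<epsilon> / 2"
      using M \<epsilon> T Q by (simp_all add: \<tau>_def \<mu>_def field_simps)
    moreover have "perturbed_Phi_bound \<tau> \<mu> ((b / a) powr (1/4)) (nat \<lceil>(b / a) powr (1/4)\<rceil> + 2) a b c
        \<le> a powr (3/4) * b powr (1/4) + \<tau> * M + (T * (3 * M / \<mu>) + T * (Q * c\<^sup>2))"
      using perturbed_Phi_bound_balanced_le[OF a b \<sigma> \<Phi>M \<tau> \<mu> \<open>\<bar>c\<bar> \<le> 1\<close>]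
      unfolding T_def Q_def by (simp only: distrib_left)
    ultimately show ?thesis by argo
  qed
  then show ?thesis using that \<tau> \<mu> \<delta> by blast
qed

section \<open>Continuity of \<open>\<beta>\<close>\<close>

definition Phi_inf :: "real \<Rightarrow> real \<Rightarrow> ennreal" where
  "Phi_inf p t = (INF w\<in>Jprime p t. Phi p w)"

lemma beta_eq_Phi_inf: "beta p t = ennreal (4 / 3 powr (3/4)) * Phi_inf p t"
  by (simp add: beta_def Phi_inf_def)

lemma Phi_inf_le: "w \<in> Jprime p t \<Longrightarrow> Phi_inf p t \<le> Phi p w"
  unfolding Phi_inf_def by (rule INF_lower)

lemma Phi_inf_le_polynomial:
  assumes p: "1 \<le> p"
  shows "Phi_inf p t \<le> ennreal ((t + 1) ^ 4 + 5 * (t + 1)\<^sup>2)"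
proof -
  note w = const_in_Jprime[OF p]
  have W: "W2p p (\<lambda>_. -1)" using w(1) by (simp add: Jprime_def)
  have pot: "pot_energy (\<lambda>_. -1) = ennreal 0" by (simp add: pot_energy_def)
  have "bend_energy p (\<lambda>_. -1) = (\<integral>\<^sup>+ y. 0 \<partial>I01)"
    unfolding bend_energy_def by (rule nn_integral_cong_AE) (use w(2) in \<open>eventually_elim, simp\<close>)
  then have bend: "bend_energy p (\<lambda>_. -1) = ennreal 0" by simp
  have bound: "perturbed_Phi_bound 1 1 1 2 0 0 c = c ^ 4 + 22 / 5 * c\<^sup>2" for c :: real
    by (simp add: perturbed_Phi_bound_def power_mult_distrib field_simps)
  have "Phi_inf p t \<le> Phi p (\<lambda>y. -1 + (t + 1) * y ^ 2)"
    using Phi_inf_le Jprime_add_monomial[OF p w(1), of 2 "t + 1"] by simp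
  also have "\<dots> \<le> ennreal (perturbed_Phi_bound 1 1 1 2 0 0 (t + 1))"
    by (rule Phi_add_monomial_le[OF p W _ pot _ bend]) auto
  also have "\<dots> \<le> ennreal ((t + 1) ^ 4 + 5 * (t + 1)\<^sup>2)"
    by (intro ennreal_leI) (simp add: bound)
  finally show ?thesis .
qed

lemma Jprime_energies:
  assumes p: "1 \<le> p" and w: "w \<in> Jprime p s" and s: "s \<noteq> -1" and fin: "Phi p w < \<infinity>"
  obtains a b where "pot_energy w = ennreal a" "bend_energy p w = ennreal b" "0 < a" "(s + 1)\<^sup>2 \<le> b"
proof -
  have bend_pos: "0 < bend_energy p w"
    using Jprime_bend_energy_ge[OF p w] s by (auto intro: less_le_trans[rotated])
  have "pot_energy w \<noteq> \<infinity>"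
  proof
    assume "pot_energy w = \<infinity>"
    moreover have "0 < epow (bend_energy p w) (1/4)"
      using bend_pos by (cases "bend_energy p w") (auto simp: epow_def)
    ultimately show False using fin by (simp add: Phi_eq_energies epow_def ennreal_mult_eq_top_iff)
  qed
  moreover have "pot_energy w \<noteq> 0" using pot_energy_eq_0_imp_eq_minus_1[OF w] s by blast
  ultimately obtain a where a: "pot_energy w = ennreal a" "0 < a"
    by (cases "pot_energy w") (auto simp: zero_less_iff_neq_zero)
  have "bend_energy p w \<noteq> \<infinity>"
  proof
    assume "bend_energy p w = \<infinity>"
    then show False using fin a by (simp add: Phi_eq_energies epow_def ennreal_mult_eq_top_iff)
  qed
  then obtain b where b: "bend_energy p w = ennreal b" "0 \<le> b" by (cases "bend_energy p w") auto
  have "(s + 1)\<^sup>2 \<le> b" using Jprime_bend_energy_ge[OF p w] b by simp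
  then show ?thesis using that a b by blast
qed

lemma Phi_inf_approx:
  assumes M: "Phi_inf p s < ennreal M" and e: "0 < e"
  obtains w where "w \<in> Jprime p s" "Phi p w < Phi_inf p s + ennreal e" "Phi p w < ennreal M"
proof -
  obtain r where "Phi_inf p s = ennreal r" "0 \<le> r" using M by (cases "Phi_inf p s") auto
  then have "Phi_inf p s < Phi_inf p s + ennreal e"
    using e by (simp add: ennreal_plus[symmetric] ennreal_less_iff del: ennreal_plus)
  then have "Phi_inf p s < min (Phi_inf p s + ennreal e) (ennreal M)" using M by simp
  then have "\<exists>w\<in>Jprime p s. Phi p w < min (Phi_inf p s + ennreal e) (ennreal M)"
    unfolding Phi_inf_def[of p s] by (simp only: INF_less_iff)
  then show ?thesis using that by auto
qed

lemma Phi_inf_add_le: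
  assumes p: "1 \<le> p" and \<sigma>: "0 < \<sigma>" and M: "0 < M" and \<epsilon>: "0 < \<epsilon>"
  obtains \<delta> where "0 < \<delta>" "\<And>s c. \<sigma> \<le> (s + 1)\<^sup>2 \<Longrightarrow> Phi_inf p s < ennreal M \<Longrightarrow> \<bar>c\<bar> < \<delta> \<Longrightarrow>
    Phi_inf p (s + c) \<le> Phi_inf p s + ennreal \<epsilon>"
proof -
  obtain \<tau> \<mu> \<delta> where \<tau>: "0 < \<tau>" and \<mu>: "0 < \<mu>" and \<delta>: "0 < \<delta>"
    and est: "\<And>a b c. 0 < a \<Longrightarrow> \<sigma> \<le> b \<Longrightarrow> a powr (3/4) * b powr (1/4) \<le> M \<Longrightarrow> \<bar>c\<bar> < \<delta> \<Longrightarrow>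
       perturbed_Phi_bound \<tau> \<mu> ((b / a) powr (1/4)) (nat \<lceil>(b / a) powr (1/4)\<rceil> + 2) a b c
         \<le> a powr (3/4) * b powr (1/4) + \<epsilon> / 2"
    using perturbation_parameters[OF M \<sigma>, of "\<epsilon> / 2"] \<epsilon> by auto
  have "Phi_inf p (s + c) \<le> Phi_inf p s + ennreal \<epsilon>"
    if s: "\<sigma> \<le> (s + 1)\<^sup>2" and sM: "Phi_inf p s < ennreal M" and c: "\<bar>c\<bar> < \<delta>" for s c
  proof -
    obtain w where w: "w \<in> Jprime p s" and wlt: "Phi p w < Phi_inf p s + ennreal (\<epsilon> / 2)" "Phi p w < ennreal M"
      using Phi_inf_approx[OF sM, of "\<epsilon> / 2"] \<epsilon> by auto
    have "s \<noteq> -1" using s \<sigma> by auto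
    have "Phi p w < \<infinity>" using wlt(2) by (rule order.strict_trans) simp
    then obtain a b where pot: "pot_energy w = ennreal a" and bend: "bend_energy p w = ennreal b"
      and a: "0 < a" and b: "(s + 1)\<^sup>2 \<le> b"
      using Jprime_energies[OF p w \<open>s \<noteq> -1\<close>] by blast
    define \<theta> where "\<theta> = (b / a) powr (1/4)"
    define \<Phi> where "\<Phi> = a powr (3/4) * b powr (1/4)"
    have b0: "0 \<le> b" using b by (meson order_trans zero_le_power2)
    have \<Phi>: "Phi p w = ennreal \<Phi>" using Phi_eq_ennreal[OF pot bend] a b0 by (simp add: \<Phi>_def)
    have \<Phi>M: "\<Phi> \<le> M" using wlt(2) \<Phi> by (simp add: \<Phi>_def ennreal_less_iff)
    have \<theta>: "0 < \<theta>" using a b0 s \<sigma> b by (simp add: \<theta>_def)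
    have W: "W2p p w" using w by (simp add: Jprime_def)
    have "Phi_inf p (s + c) \<le> Phi p (\<lambda>y. w y + c * y ^ (nat \<lceil>\<theta>\<rceil> + 2))"
      by (intro Phi_inf_le Jprime_add_monomial[OF p w]) simp
    also have "\<dots> \<le> ennreal (perturbed_Phi_bound \<tau> \<mu> \<theta> (nat \<lceil>\<theta>\<rceil> + 2) a b c)"
      using a b0 by (intro Phi_add_monomial_le[OF p W _ pot _ bend _ \<tau> \<mu> \<theta>]) auto
    also have "\<dots> \<le> ennreal (\<Phi> + \<epsilon> / 2)"
      using est[OF a order_trans[OF s b] \<Phi>M[unfolded \<Phi>_def] c] by (intro ennreal_leI) (simp add: \<theta>_def \<Phi>_def)
    also have "\<dots> = Phi p w + ennreal (\<epsilon> / 2)"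
      using \<Phi> \<epsilon> a b0 by (simp add: \<Phi>_def ennreal_plus)
    also have "\<dots> \<le> Phi_inf p s + ennreal (\<epsilon> / 2) + ennreal (\<epsilon> / 2)"
      using wlt(1) by (intro add_right_mono) (simp add: less_imp_le)
    also have "\<dots> = Phi_inf p s + ennreal \<epsilon>"
      using \<epsilon> by (simp add: add.assoc ennreal_plus[symmetric] del: ennreal_plus)
    finally show ?thesis .
  qed
  then show ?thesis using that \<delta> by blast
qed

lemma isCont_if_uniform_upper_estimate:
  fixes f :: "real \<Rightarrow> real"
  assumes est: "\<And>\<epsilon>. 0 < \<epsilon> \<Longrightarrow> \<exists>\<delta>>0. \<forall>s c. \<bar>s - t0\<bar> < \<delta> \<longrightarrow> \<bar>c\<bar> < \<delta> \<longrightarrow> f s \<le> f t0 + 1 \<longrightarrow>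
      f (s + c) \<le> f s + \<epsilon>"
  shows "isCont f t0"
  unfolding continuous_at_eps_delta
proof (intro allI impI)
  fix \<epsilon> :: real assume "0 < \<epsilon>"
  then obtain \<delta> where \<delta>: "0 < \<delta>" and le: "\<And>s c. \<bar>s - t0\<bar> < \<delta> \<Longrightarrow> \<bar>c\<bar> < \<delta> \<Longrightarrow> f s \<le> f t0 + 1 \<Longrightarrow>
      f (s + c) \<le> f s + min (\<epsilon> / 2) 1"
    using est[of "min (\<epsilon> / 2) 1"] by auto
  have "\<bar>f x - f t0\<bar> < \<epsilon>" if "dist x t0 < \<delta>" for x
  proof -
    have x: "\<bar>x - t0\<bar> < \<delta>" "\<bar>t0 - x\<bar> < \<delta>" using that by (auto simp: dist_real_def)
    have "f x \<le> f t0 + min (\<epsilon> / 2) 1" using le[of t0 "x - t0"] \<delta> x by simp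
    moreover from this have "f t0 \<le> f x + min (\<epsilon> / 2) 1" using le[of x "t0 - x"] x by simp
    ultimately show ?thesis using \<open>0 < \<epsilon>\<close> by linarith
  qed
  then show "\<exists>\<delta>>0. \<forall>x. dist x t0 < \<delta> \<longrightarrow> dist (f x) (f t0) < \<epsilon>"
    using \<delta> by (auto simp: dist_real_def)
qed

lemma Phi_inf_less_top: "1 \<le> p \<Longrightarrow> Phi_inf p t < \<infinity>"
  by (rule order.strict_trans1[OF Phi_inf_le_polynomial]) auto

lemma Phi_inf_eq_ennreal: "1 \<le> p \<Longrightarrow> Phi_inf p t = ennreal (enn2real (Phi_inf p t))"
  using Phi_inf_less_top[of p t] by (simp add: less_top)

lemma isCont_Phi_inf_minus_1:
  assumes p: "1 \<le> p"
  shows "isCont (\<lambda>t. enn2real (Phi_inf p t)) (-1)"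
proof -
  have le: "enn2real (Phi_inf p t) \<le> (t + 1) ^ 4 + 5 * (t + 1)\<^sup>2" for t
  proof -
    have "0 \<le> (t + 1) ^ 4 + 5 * (t + 1)\<^sup>2" by (simp add: zero_le_even_power)
    then show ?thesis using Phi_inf_le_polynomial[OF p, of t]
      by (subst (asm) Phi_inf_eq_ennreal[OF p]) (simp add: ennreal_le_iff del: ennreal_plus)
  qed
  have "((\<lambda>t::real. (t + 1) ^ 4 + 5 * (t + 1)\<^sup>2) \<longlongrightarrow> (-1 + 1) ^ 4 + 5 * (-1 + 1)\<^sup>2) (at (-1))"
    by (intro tendsto_intros)
  then have "((\<lambda>t::real. (t + 1) ^ 4 + 5 * (t + 1)\<^sup>2) \<longlongrightarrow> 0) (at (-1))" by simp
  from tendsto_sandwich[OF _ _ tendsto_const this]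
  have "((\<lambda>t. enn2real (Phi_inf p t)) \<longlongrightarrow> 0) (at (-1))" using le by simp
  moreover have "enn2real (Phi_inf p (-1)) = 0" using le[of "-1"] by (simp add: antisym)
  ultimately show ?thesis by (simp add: isCont_def)
qed

lemma quarter_square_le_if_close:
  fixes s t :: real
  assumes "\<bar>s - t\<bar> < \<bar>t + 1\<bar> / 2"
  shows "(t + 1)\<^sup>2 / 4 \<le> (s + 1)\<^sup>2"
proof -
  have "\<bar>t + 1\<bar> \<le> \<bar>s + 1\<bar> + \<bar>s - t\<bar>"
    using abs_triangle_ineq[of "s + 1" "t - s"] abs_minus_commute[of t s] by simp
  moreover have "\<And>A B C :: real. A \<le> B + C \<Longrightarrow> C < A / 2 \<Longrightarrow> A / 2 \<le> B" by linarith
  ultimately have "\<bar>t + 1\<bar> / 2 \<le> \<bar>s + 1\<bar>" using assms by blast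
  then have "(\<bar>t + 1\<bar> / 2)\<^sup>2 \<le> \<bar>s + 1\<bar>\<^sup>2" by (rule power_mono) simp
  then show ?thesis by (simp add: power_divide)
qed

lemma isCont_Phi_inf:
  assumes p: "1 \<le> p" and t0: "t0 \<noteq> -1"
  shows "isCont (\<lambda>t. enn2real (Phi_inf p t)) t0"
proof (rule isCont_if_uniform_upper_estimate)
  define f where "f t = enn2real (Phi_inf p t)" for t
  have Phi_inf: "Phi_inf p t = ennreal (f t)" and f_nonneg: "0 \<le> f t" for t
    using Phi_inf_eq_ennreal[OF p] by (simp_all add: f_def)
  fix \<epsilon> :: real assume "0 < \<epsilon>"
  have \<sigma>: "0 < (t0 + 1)\<^sup>2 / 4" using t0 by simp
  have M: "0 < f t0 + 2" by (simp add: f_def add_nonneg_pos)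
  obtain \<delta> where \<delta>: "0 < \<delta>" and est: "\<And>s c. (t0 + 1)\<^sup>2 / 4 \<le> (s + 1)\<^sup>2 \<Longrightarrow>
      Phi_inf p s < ennreal (f t0 + 2) \<Longrightarrow> \<bar>c\<bar> < \<delta> \<Longrightarrow> Phi_inf p (s + c) \<le> Phi_inf p s + ennreal \<epsilon>"
    using Phi_inf_add_le[OF p \<sigma> _ \<open>0 < \<epsilon>\<close>, of "f t0 + 2"] M by blast
  have "f (s + c) \<le> f s + \<epsilon>"
    if s: "\<bar>s - t0\<bar> < min \<delta> (\<bar>t0 + 1\<bar> / 2)" and c: "\<bar>c\<bar> < min \<delta> (\<bar>t0 + 1\<bar> / 2)"
      and fs: "f s \<le> f t0 + 1" for s c
  proof -
    have "(t0 + 1)\<^sup>2 / 4 \<le> (s + 1)\<^sup>2" using s by (intro quarter_square_le_if_close) simp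
    moreover have "Phi_inf p s < ennreal (f t0 + 2)"
      using fs f_nonneg[of s] by (simp add: Phi_inf ennreal_less_iff)
    ultimately have "Phi_inf p (s + c) \<le> Phi_inf p s + ennreal \<epsilon>" using est c by simp
    then show ?thesis using \<open>0 < \<epsilon>\<close> f_nonneg[of s]
      by (simp add: Phi_inf ennreal_plus[symmetric] del: ennreal_plus)
  qed
  moreover have "0 < min \<delta> (\<bar>t0 + 1\<bar> / 2)" using \<delta> t0 by simp
  ultimately show "\<exists>\<delta>>0. \<forall>s c. \<bar>s - t0\<bar> < \<delta> \<longrightarrow> \<bar>c\<bar> < \<delta> \<longrightarrow> f s \<le> f t0 + 1 \<longrightarrow> f (s + c) \<le> f s + \<epsilon>"
    by blast
qed

lemma continuous_Phi_inf:
  assumes p: "1 \<le> p"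
  shows "continuous_on UNIV (\<lambda>t. enn2real (Phi_inf p t))"
  using isCont_Phi_inf_minus_1[OF p] isCont_Phi_inf[OF p]
  by (metis continuous_at_imp_continuous_on)

theorem lemma4p4:
  fixes p :: real
  assumes "1 \<le> p" and "p \<le> 4"
  shows "(\<forall>t. beta p t < \<infinity>) \<and> continuous_on UNIV (\<lambda>t. enn2real (beta p t))"
proof
  show "\<forall>t. beta p t < \<infinity>"
    using Phi_inf_less_top[OF assms(1)] by (simp add: beta_eq_Phi_inf ennreal_mult_less_top)
  have "enn2real (beta p t) = 4 / 3 powr (3/4) * enn2real (Phi_inf p t)" for t
    by (simp add: beta_eq_Phi_inf enn2real_mult)
  then show "continuous_on UNIV (\<lambda>t. enn2real (beta p t))"
    by (simp only:) (intro continuous_intros continuous_Phi_inf[OF assms(1)])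
qed

end
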